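(* Let $\mathfrak{g}_0=\mathfrak{sp}(2n,\mathbb{R})$, $n\geq 2$, and let $(p_1,q_1),\dots,(p_l,q_l)$ be a sequence as in the context, with corresponding $H$. For $t=0,1,\dots,l$ let $m_t$ be the number of coordinates $i$ with $|H_i|=t$ (so $m_0=r$, $m_t=p_t+q_t$), and partition $\{1,\dots,n\}$ into consecutive blocks $S_0=\{1,\dots,m_0\}$, $S_1$ the next $m_1$ integers, ..., $S_l$ the largest $m_l$ integers. Then the face $\Phi_H$ of $W\rho$ is the set of all $\mu\in\mathbb{R}^n$ such that: for each $t\geq1$, $\{|\mu_i|: |H_i|=t\}=S_t$ and $\mu_i$ has the same sign as $H_i$ for these $i$ (positive where $H_i=t$, negative where $H_i=-t$); and $\{|\mu_i|: H_i=0\}=S_0$ with arbitrary signs. Equivalently $\Phi_H=W_\mathfrak{l}\rho''$ where $\rho''$ is any element of this set. The set $\Phi_H\cap C_\mathfrak{k}$ consists of the elements of $\Phi_H$ with strictly decreasing coordinates, and it determines $\Phi_H$: distinct such sequences give distinct sets $\Phi_H\cap C_\mathfrak{k}$. Consequently the Dirac cohomology $H_D(A_\mathfrak{q})$, whose $\widetilde K$-types have infinitesimal characters exactly $\Phi_H\cap C_\mathfrak{k}$, uniquely determines $A_\mathfrak{q}$ among the $A_\mathfrak{q}$ with $\mathfrak{l}_0$ without compact factors.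
   Context: Setting: $\mathfrak{g}_0=\mathfrak{sp}(2n,\mathbb{R})$, $\mathfrak{k}_0=\mathfrak{u}(n)$, compact Cartan $\mathfrak{t}_0$, $i\mathfrak{t}_0\cong\mathfrak{t}^*_\mathbb{R}\cong\mathbb{R}^n$ identified via the standard inner product, $\mu(H)=\langle\mu,H\rangle$. Roots $\pm\epsilon_i\pm\epsilon_j$ ($i<j$), $\pm2\epsilon_i$; compact positive roots $\epsilon_i-\epsilon_j$ ($i<j$). The Weyl group $W$ is the group of all signed permutations of coordinates, $\rho=(n,n-1,\dots,1)$, so $W\rho$ is the set of all vectors whose absolute values of coordinates are a permutation of $\{1,\dots,n\}$. $C_\mathfrak{k}$ is the $\mathfrak{k}$-dominant chamber $\{x_1\geq\dots\geq x_n\}$. For $H\in i\mathfrak{t}_0$ the face is $\Phi_H=\{\mu\in W\rho:\ \mu(H)\geq\nu(H)\ \forall\nu\in W\rho\}$. For $H$ define $\mathfrak{l}=\mathfrak{t}\oplus\bigoplus_{\alpha(H)=0}\mathfrak{g}_\alpha$, $\mathfrak{u}=\bigoplus_{\alpha(H)>0}\mathfrak{g}_\alpha$, $\mathfrak{q}=\mathfrak{l}\oplus\mathfrak{u}$, $W_\mathfrak{l}$ the Weyl group of $\mathfrak{l}$; $A_\mathfrak{q}$ is the Vogan–Zuckerman module $A_\mathfrak{q}(0)$ with Dirac cohomology $H_D$. The sequences: $(p_1,q_1),\dots,(p_l,q_l)$ of nonnegative integer pairs with $\sum(p_i+q_i)\leq n$, $p_i=0\Rightarrow q_i=1$, $q_i=0\Rightarrow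 p_i=1$, with $r=n-\sum(p_i+q_i)$ and $H=(l^{(p_l)},(l-1)^{(p_{l-1})},\dots,1^{(p_1)},0^{(r)},(-1)^{(q_1)},\dots,(-l)^{(q_l)})$, where $a^{(m)}$ denotes $m$ consecutive entries equal to $a$. These parametrize bijectively the admissible $\Theta$-stable parabolic subalgebras whose Levi factor $\mathfrak{l}_0$ has no compact simple ideal. *)

theory Defs
  imports Complex_Main "HOL-Library.Multiset" "HOL-Combinatorics.Permutations"
begin

text \<open>Vectors of R^n are real lists of length n; coordinate i (1-based in the paper)
  is list index i-1.  The pairing mu(H) is the standard inner product.\<close>

definition ip :: "real list \<Rightarrow> real list \<Rightarrow> real" where
  "ip x y = (\<Sum>i<length x. x ! i * y ! i)"

definition rho :: "nat \<Rightarrow> real list" where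
  "rho n = map real (rev [1..<n+1])"

definition Weyl :: "nat \<Rightarrow> (real list \<Rightarrow> real list) set" where
  "Weyl n = {(\<lambda>x. map (\<lambda>i. s i * x ! (\<sigma> i)) [0..<n]) | \<sigma> s.
               \<sigma> permutes {..<n} \<and> (\<forall>i. s i = 1 \<or> s i = -1)}"

definition Wrho :: "nat \<Rightarrow> real list set" where
  "Wrho n = (\<lambda>w. w (rho n)) ` Weyl n"

definition face :: "nat \<Rightarrow> real list \<Rightarrow> real list set" where
  "face n H = {\<mu> \<in> Wrho n. \<forall>\<nu> \<in> Wrho n. ip \<nu> H \<le> ip \<mu> H}"

definition Ck :: "nat \<Rightarrow> real list set" where
  "Ck n = {x. length x = n \<and> (\<forall>i j. i < j \<and> j < n \<longrightarrow> x ! j \<le> x ! i)}"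

text \<open>Admissible sequences (p_1,q_1),...,(p_l,q_l), given as a list whose
  (t-1)-th entry is (p_t,q_t).\<close>
definition admissible :: "nat \<Rightarrow> (nat \<times> nat) list \<Rightarrow> bool" where
  "admissible n ps \<longleftrightarrow> (\<Sum>(p,q)\<leftarrow>ps. p + q) \<le> n \<and>
     (\<forall>(p,q) \<in> set ps. (p = 0 \<longrightarrow> q = 1) \<and> (q = 0 \<longrightarrow> p = 1))"

text \<open>H = (l^(p_l), ..., 1^(p_1), 0^(r), (-1)^(q_1), ..., (-l)^(q_l)).\<close>
definition Hvec :: "nat \<Rightarrow> (nat \<times> nat) list \<Rightarrow> real list" where
  "Hvec n ps = (let l = length ps; r = n - (\<Sum>(p,q)\<leftarrow>ps. p + q) in
     concat (map (\<lambda>t. replicate (fst (ps ! (t - 1))) (real t)) (rev [1..<l+1]))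
     @ replicate r 0
     @ concat (map (\<lambda>t. replicate (snd (ps ! (t - 1))) (- real t)) [1..<l+1]))"

definition mcount :: "real list \<Rightarrow> nat \<Rightarrow> nat" where
  "mcount H t = card {i. i < length H \<and> \<bar>H ! i\<bar> = real t}"

definition block :: "real list \<Rightarrow> nat \<Rightarrow> real set" where
  "block H t = real ` {(\<Sum>s<t. mcount H s) + 1 .. (\<Sum>s\<le>t. mcount H s)}"

definition face_descr :: "nat \<Rightarrow> (nat \<times> nat) list \<Rightarrow> real list set" where
  "face_descr n ps = (let H = Hvec n ps; l = length ps in
     {\<mu>. length \<mu> = n \<and>
         (\<forall>t \<in> {1..l}.
            (\<lambda>i. \<bar>\<mu> ! i\<bar>) ` {i. i < n \<and> \<bar>H ! i\<bar> = real t} = block H t \<and>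
            (\<forall>i < n. \<bar>H ! i\<bar> = real t \<longrightarrow> sgn (\<mu> ! i) = sgn (H ! i))) \<and>
         (\<lambda>i. \<bar>\<mu> ! i\<bar>) ` {i. i < n \<and> H ! i = 0} = block H 0})"

definition evec :: "nat \<Rightarrow> nat \<Rightarrow> real list" where
  "evec n i = map (\<lambda>k. if k = i then 1 else 0) [0..<n]"

definition vadd :: "real list \<Rightarrow> real list \<Rightarrow> real list" where
  "vadd x y = map2 (+) x y"

definition vscale :: "real \<Rightarrow> real list \<Rightarrow> real list" where
  "vscale c x = map (\<lambda>a. c * a) x"

definition roots :: "nat \<Rightarrow> real list set" where
  "roots n = {vadd (vscale a (evec n i)) (vscale b (evec n j)) | i j a b.
                i < n \<and> j < n \<and> i \<noteq> j \<and> (a = 1 \<or> a = -1) \<and> (b = 1 \<or> b = -1)}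
           \<union> {vscale c (evec n i) | i c. i < n \<and> (c = 2 \<or> c = -2)}"

definition reflection :: "real list \<Rightarrow> real list \<Rightarrow> real list" where
  "reflection \<alpha> x = vadd x (vscale (- 2 * ip x \<alpha> / ip \<alpha> \<alpha>) \<alpha>)"

inductive_set Wl :: "nat \<Rightarrow> real list \<Rightarrow> (real list \<Rightarrow> real list) set" for n H where
  Wl_id: "id \<in> Wl n H"
| Wl_step: "\<alpha> \<in> roots n \<Longrightarrow> ip \<alpha> H = 0 \<Longrightarrow> w \<in> Wl n H \<Longrightarrow> reflection \<alpha> \<circ> w \<in> Wl n H"

end

theory Submission
  imports Defs
begin

text \<open>A point of \<open>W\<rho>\<close> is a signed permutation of \<open>(n, \<dots>, 1)\<close>.  If it maximises \<open>\<mu>(H)\<close>,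
  then flipping one sign or exchanging two coordinates cannot increase the pairing, so
  \<open>\<mu>\<^sub>i\<close> has the sign of \<open>H\<^sub>i\<close> and \<open>\<bar>\<mu>\<^sub>i\<bar>\<close> grows with \<open>\<bar>H\<^sub>i\<bar>\<close>.  Counting then fixes the
  set of absolute values on each level of \<open>\<bar>H\<bar>\<close>; the pairing is constant on the vectors so
  described, hence they form the whole face, and any two of them are joined by reflections
  in roots orthogonal to \<open>H\<close>, i.e. by \<open>W\<^sub>l\<close>.  Two explicit points of \<open>\<Phi>\<^sub>H \<inter> C\<^sub>k\<close>, giving
  the zero block positive resp. negative signs, reveal the signs of \<open>H\<close> and the order of
  the \<open>\<bar>H\<^sub>i\<bar>\<close>.  For an admissible sequence every level \<open>1, \<dots>, l\<close> occurs and every repeated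
  nonzero value has an opposite, so this order determines \<open>H\<close> and hence the sequence.\<close>

section \<open>The orbit \<open>W\<rho>\<close>\<close>

lemma length_rho [simp]: "length (rho n) = n"
  by (simp add: rho_def)

lemma rho_nth: "k < n \<Longrightarrow> rho n ! k = real (n - k)"
proof -
  assume k: "k < n"
  have "rev [1..<n+1] ! k = [1..<n+1] ! (n - Suc k)"
    using k by (simp only: rev_nth length_upt) simp
  also have "\<dots> = n - k" using k by (subst nth_upt) auto
  finally show ?thesis using k unfolding rho_def by (simp only: nth_map length_rev length_upt)
qed

lemma image_diff_lessThan: "(\<lambda>k. n - k) ` {..<n} = {1..(n::nat)}"
proof
  show "{1..n} \<subseteq> (\<lambda>k. n - k) ` {..<n}"
  proof
    fix m assume "m \<in> {1..n}"
    then have "m = n - (n - m)" "n - m < n" by auto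
    then show "m \<in> (\<lambda>k. n - k) ` {..<n}" by blast
  qed
qed auto

lemma inj_on_abs_if_image_eq:
  assumes "(\<lambda>i. \<bar>\<mu>!i\<bar>) ` {..<n} = real ` {1..n}"
  shows "inj_on (\<lambda>i. \<bar>\<mu>!i\<bar>) {..<n}"
proof (rule eq_card_imp_inj_on)
  show "card ((\<lambda>i. \<bar>\<mu>!i\<bar>) ` {..<n}) = card {..<n}"
    using assms by (simp add: card_image inj_on_def)
qed simp

lemma mem_Wrho_iff:
  "\<mu> \<in> Wrho n \<longleftrightarrow> length \<mu> = n \<and> (\<lambda>i. \<bar>\<mu>!i\<bar>) ` {..<n} = real ` {1..n}"
proof
  assume "\<mu> \<in> Wrho n"
  then obtain \<sigma> s where \<mu>: "\<mu> = map (\<lambda>i. s i * rho n ! (\<sigma> i)) [0..<n]"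
    and \<sigma>: "\<sigma> permutes {..<n}" and s: "\<forall>i. s i = 1 \<or> s i = -1"
    unfolding Wrho_def Weyl_def by auto
  have abs: "i < n \<Longrightarrow> \<bar>\<mu>!i\<bar> = real (n - \<sigma> i)" for i
    using s[rule_format, of i] permutes_in_image[OF \<sigma>, of i] by (auto simp: \<mu> rho_nth)
  have "(\<lambda>i. \<bar>\<mu>!i\<bar>) ` {..<n} = real ` ((\<lambda>k. n - k) ` (\<sigma> ` {..<n}))"
    using abs by (auto simp: image_iff)
  then show "length \<mu> = n \<and> (\<lambda>i. \<bar>\<mu>!i\<bar>) ` {..<n} = real ` {1..n}"
    using \<sigma> by (simp add: \<mu> permutes_image image_diff_lessThan)
next
  assume "length \<mu> = n \<and> (\<lambda>i. \<bar>\<mu>!i\<bar>) ` {..<n} = real ` {1..n}"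
  then have len: "length \<mu> = n" and img: "(\<lambda>i. \<bar>\<mu>!i\<bar>) ` {..<n} = real ` {1..n}" by auto
  have nat: "i < n \<Longrightarrow> \<exists>m. m \<in> {1..n} \<and> \<bar>\<mu>!i\<bar> = real m" for i
    using img by (metis (no_types, lifting) image_iff lessThan_iff)
  \<comment> \<open>the coordinate of absolute value m is sent to position n - m of \<open>rho n\<close>\<close>
  define \<sigma> where "\<sigma> i = (if i < n then n - nat \<lfloor>\<bar>\<mu>!i\<bar>\<rfloor> else i)" for i
  define s where "s i = (if \<mu>!i < 0 then -1 else (1::real))" for i
  have \<sigma>_less: "i < n \<Longrightarrow> \<sigma> i < n" for i using nat[of i] by (auto simp: \<sigma>_def)
  have \<sigma>_val: "i < n \<Longrightarrow> real (n - \<sigma> i) = \<bar>\<mu>!i\<bar>" for i using nat[of i] by (auto simp: \<sigma>_def)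
  have "inj_on \<sigma> {..<n}"
    using inj_onD[OF inj_on_abs_if_image_eq[OF img]] \<sigma>_val by (intro inj_onI) (metis lessThan_iff)
  moreover have "\<sigma> ` {..<n} \<subseteq> {..<n}" using \<sigma>_less by auto
  ultimately have "bij_betw \<sigma> {..<n} {..<n}" by (simp add: bij_betw_def endo_inj_surj)
  then have perm: "\<sigma> permutes {..<n}" by (rule bij_imp_permutes) (simp add: \<sigma>_def)
  have "\<mu> = map (\<lambda>i. s i * rho n ! (\<sigma> i)) [0..<n]"
  proof (rule nth_equalityI)
    fix i assume "i < length \<mu>"
    then have i: "i < n" using len by simp
    have "rho n ! (\<sigma> i) = \<bar>\<mu>!i\<bar>" using \<sigma>_less[OF i] \<sigma>_val[OF i] by (simp add: rho_nth)
    then show "\<mu> ! i = map (\<lambda>i. s i * rho n ! (\<sigma> i)) [0..<n] ! i"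
      using i by (simp add: s_def abs_if)
  qed (simp add: len)
  moreover have "\<forall>i. s i = 1 \<or> s i = -1" by (simp add: s_def)
  ultimately show "\<mu> \<in> Wrho n" unfolding Wrho_def Weyl_def using perm
    by (intro image_eqI[where x="\<lambda>x. map (\<lambda>i. s i * x ! \<sigma> i) [0..<n]"]) auto
qed

lemma length_Wrho: "\<mu> \<in> Wrho n \<Longrightarrow> length \<mu> = n"
  by (simp add: mem_Wrho_iff)

lemma Wrho_abs_nat: "\<mu> \<in> Wrho n \<Longrightarrow> i < n \<Longrightarrow> \<exists>m. m \<in> {1..n} \<and> \<bar>\<mu>!i\<bar> = real m"
  unfolding mem_Wrho_iff by (metis (no_types, lifting) image_iff lessThan_iff)

lemma Wrho_nth_nonzero: "\<mu> \<in> Wrho n \<Longrightarrow> i < n \<Longrightarrow> \<mu>!i \<noteq> 0"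
  using Wrho_abs_nat by fastforce

lemma inj_on_abs_Wrho: "\<mu> \<in> Wrho n \<Longrightarrow> inj_on (\<lambda>i. \<bar>\<mu>!i\<bar>) {..<n}"
  by (simp add: mem_Wrho_iff inj_on_abs_if_image_eq)

lemma Wrho_abs_eqD: "\<mu> \<in> Wrho n \<Longrightarrow> i < n \<Longrightarrow> j < n \<Longrightarrow> \<bar>\<mu>!i\<bar> = \<bar>\<mu>!j\<bar> \<Longrightarrow> i = j"
  using inj_on_abs_Wrho by (metis inj_onD lessThan_iff)

lemma rho_in_Wrho: "rho n \<in> Wrho n"
proof -
  have "(\<lambda>i. \<bar>rho n ! i\<bar>) ` {..<n} = real ` ((\<lambda>k. n - k) ` {..<n})"
    by (auto simp: rho_nth image_iff simp del: of_nat_diff)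
  then show ?thesis by (simp add: mem_Wrho_iff image_diff_lessThan)
qed

lemma finite_Wrho: "finite (Wrho n)"
proof -
  let ?S = "real ` {1..n} \<union> uminus ` real ` {1..n}"
  have "Wrho n \<subseteq> {xs. set xs \<subseteq> ?S \<and> length xs = n}"
  proof
    fix \<mu> assume \<mu>: "\<mu> \<in> Wrho n"
    have "set \<mu> \<subseteq> ?S"
    proof
      fix x assume "x \<in> set \<mu>"
      then obtain i where i: "i < n" "x = \<mu>!i" using length_Wrho[OF \<mu>]
        by (auto simp: in_set_conv_nth)
      obtain k where "k \<in> {1..n}" "\<bar>x\<bar> = real k" using Wrho_abs_nat[OF \<mu> i(1)] i by auto
      then show "x \<in> ?S" by (cases "x \<ge> 0") (auto simp: abs_if image_iff intro!: bexI[of _ k])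
    qed
    then show "\<mu> \<in> {xs. set xs \<subseteq> ?S \<and> length xs = n}" using length_Wrho[OF \<mu>] by simp
  qed
  moreover have "finite {xs. set xs \<subseteq> ?S \<and> length xs = n}"
    by (rule finite_lists_length_eq) simp
  ultimately show ?thesis by (rule finite_subset)
qed

lemma Wrho_permute_abs:
  assumes x: "x \<in> Wrho n" and \<sigma>: "\<sigma> permutes {..<n}" and len: "length y = n"
    and abs: "\<And>k. k < n \<Longrightarrow> \<bar>y!k\<bar> = \<bar>x!(\<sigma> k)\<bar>"
  shows "y \<in> Wrho n"
proof -
  have "(\<lambda>k. \<bar>y!k\<bar>) ` {..<n} = (\<lambda>k. \<bar>x!k\<bar>) ` (\<sigma> ` {..<n})"
    using abs by (auto simp: image_iff)
  then show ?thesis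
    using x \<sigma> len by (simp add: mem_Wrho_iff permutes_image)
qed

lemma Wrho_flip:
  assumes x: "x \<in> Wrho n" and i: "i < n"
  shows "x[i := - x!i] \<in> Wrho n"
proof (rule Wrho_permute_abs[OF x permutes_id])
  fix k assume "k < n"
  then show "\<bar>x[i := - x!i] ! k\<bar> = \<bar>x ! id k\<bar>"
    using length_Wrho[OF x] by (cases "k = i") simp_all
qed (simp add: length_Wrho[OF x])

lemma Wrho_swap:
  assumes x: "x \<in> Wrho n" and ij: "i < n" "j < n" "i \<noteq> j" and s: "\<bar>s\<bar> = 1" "\<bar>s'\<bar> = 1"
  shows "x[i := s * x!j, j := s' * x!i] \<in> Wrho n"
proof (rule Wrho_permute_abs[OF x permutes_swap_id[of i "{..<n}" j]])
  fix k assume "k < n"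
  then show "\<bar>x[i := s * x!j, j := s' * x!i] ! k\<bar> = \<bar>x ! Transposition.transpose i j k\<bar>"
    using length_Wrho[OF x] ij s by (cases "k = i"; cases "k = j") (simp_all add: abs_mult)
qed (use ij length_Wrho[OF x] in simp_all)

lemma card_abs_Wrho:
  assumes \<mu>: "\<mu> \<in> Wrho n" and i: "i < n"
  shows "real (card {k. k < n \<and> \<bar>\<mu>!k\<bar> \<le> \<bar>\<mu>!i\<bar>}) = \<bar>\<mu>!i\<bar>"
    and "real (card {k. k < n \<and> \<bar>\<mu>!k\<bar> < \<bar>\<mu>!i\<bar>}) = \<bar>\<mu>!i\<bar> - 1"
proof -
  obtain m where m: "m \<in> {1..n}" "\<bar>\<mu>!i\<bar> = real m" using Wrho_abs_nat[OF \<mu> i] by auto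
  have img: "(\<lambda>i. \<bar>\<mu>!i\<bar>) ` {..<n} = real ` {1..n}" using \<mu> by (simp add: mem_Wrho_iff)
  have card_eq: "card {k. k < n \<and> P \<bar>\<mu>!k\<bar>} = card {x \<in> real ` {1..n}. P x}" for P
  proof -
    have "inj_on (\<lambda>k. \<bar>\<mu>!k\<bar>) {k. k < n \<and> P \<bar>\<mu>!k\<bar>}"
      using inj_on_abs_Wrho[OF \<mu>] by (rule inj_on_subset) auto
    moreover have "(\<lambda>k. \<bar>\<mu>!k\<bar>) ` {k. k < n \<and> P \<bar>\<mu>!k\<bar>} = {x \<in> real ` {1..n}. P x}"
      unfolding img[symmetric] by auto
    ultimately show ?thesis by (metis card_image)
  qed
  have "{x \<in> real ` {1..n}. x \<le> real m} = real ` {1..m}" using m by auto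
  then have "card {k. k < n \<and> \<bar>\<mu>!k\<bar> \<le> \<bar>\<mu>!i\<bar>} = m"
    using card_eq[of "\<lambda>x. x \<le> real m"] m(2) by (simp add: card_image)
  then show "real (card {k. k < n \<and> \<bar>\<mu>!k\<bar> \<le> \<bar>\<mu>!i\<bar>}) = \<bar>\<mu>!i\<bar>" using m(2) by simp
  have "{x \<in> real ` {1..n}. x < real m} = real ` {1..<m}" using m by auto
  then have "card {k. k < n \<and> \<bar>\<mu>!k\<bar> < \<bar>\<mu>!i\<bar>} = m - 1"
    using card_eq[of "\<lambda>x. x < real m"] m(2) by (simp add: card_image)
  then show "real (card {k. k < n \<and> \<bar>\<mu>!k\<bar> < \<bar>\<mu>!i\<bar>}) = \<bar>\<mu>!i\<bar> - 1" using m by simp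
qed

section \<open>Optimality of the points of a face\<close>

lemma ip_update:
  assumes "i < length x"
  shows "ip (x[i := v]) G = ip x G + (v - x!i) * G!i"
proof -
  have "ip (x[i := v]) G = (\<Sum>k<length x. x!k * G!k + (if k = i then (v - x!i) * G!i else 0))"
    unfolding ip_def by (intro sum.cong) (auto simp: nth_list_update algebra_simps)
  also have "\<dots> = ip x G + (v - x!i) * G!i"
    using assms by (simp add: sum.distrib ip_def)
  finally show ?thesis .
qed

lemma ip_commute: "length x = length y \<Longrightarrow> ip x y = ip y x"
  by (simp add: ip_def mult.commute)

lemma ip_vadd_vscale:
  assumes "length x = n" "length \<alpha> = n"
  shows "ip (vadd x (vscale c \<alpha>)) G = ip x G + c * ip \<alpha> G"
  using assms unfolding ip_def vadd_def vscale_def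
  by (simp add: sum.distrib sum_distrib_left algebra_simps)

lemma face_Wrho: "\<nu> \<in> face n G \<Longrightarrow> \<nu> \<in> Wrho n"
  by (simp add: face_def)

lemma face_nonempty: "face n G \<noteq> {}"
proof -
  let ?f = "\<lambda>\<nu>. ip \<nu> G"
  have fin: "finite (?f ` Wrho n)" using finite_Wrho by simp
  have ne: "?f ` Wrho n \<noteq> {}" using rho_in_Wrho by auto
  obtain \<nu> where "\<nu> \<in> Wrho n" "?f \<nu> = Max (?f ` Wrho n)" using Max_in[OF fin ne] by auto
  then have "\<nu> \<in> face n G" unfolding face_def using Max_ge[OF fin] by auto
  then show ?thesis by blast
qed

lemma face_sign_compatible:
  assumes f: "\<nu> \<in> face n G" and i: "i < n"
  shows "0 \<le> \<nu>!i * G!i"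
proof -
  have W: "\<nu> \<in> Wrho n" using face_Wrho[OF f] .
  have "ip (\<nu>[i := - \<nu>!i]) G \<le> ip \<nu> G"
    using f Wrho_flip[OF W i] by (simp add: face_def)
  then show ?thesis using ip_update[of i \<nu> "- \<nu>!i" G] i length_Wrho[OF W]
    by (simp add: mult.commute)
qed

lemma sgn_mult_eq_abs: "x \<noteq> 0 \<Longrightarrow> 0 \<le> x * y \<Longrightarrow> sgn x * y = \<bar>y\<bar>"
  for x y :: real
  by (cases "x > 0") (auto simp: sgn_if abs_if mult_less_0_iff zero_le_mult_iff)

lemma face_abs_mono:
  assumes f: "\<nu> \<in> face n G" and a: "a < n" and b: "b < n" and lt: "\<bar>\<nu>!a\<bar> < \<bar>\<nu>!b\<bar>"
  shows "\<bar>G!a\<bar> \<le> \<bar>G!b\<bar>"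
proof (rule ccontr)
  assume C: "\<not> \<bar>G!a\<bar> \<le> \<bar>G!b\<bar>"
  have W: "\<nu> \<in> Wrho n" using face_Wrho[OF f] .
  have len: "length \<nu> = n" using length_Wrho[OF W] .
  have ab: "a \<noteq> b" using lt by auto
  have nza: "\<nu>!a \<noteq> 0" and nzb: "\<nu>!b \<noteq> 0" using Wrho_nth_nonzero[OF W] a b by auto
  \<comment> \<open>exchange the absolute values at \<open>a\<close> and \<open>b\<close>, keeping the signs\<close>
  let ?sa = "sgn (\<nu>!a) * sgn (\<nu>!b)" and ?sb = "sgn (\<nu>!b) * sgn (\<nu>!a)"
  let ?\<nu>' = "\<nu>[a := ?sa * \<nu>!b, b := ?sb * \<nu>!a]"
  have "?\<nu>' \<in> Wrho n" using Wrho_swap[OF W a b ab] nza nzb by (simp add: abs_mult)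
  then have le: "ip ?\<nu>' G \<le> ip \<nu> G" using f by (simp add: face_def)
  have sa: "?sa * \<nu>!b = sgn (\<nu>!a) * \<bar>\<nu>!b\<bar>" and sb: "?sb * \<nu>!a = sgn (\<nu>!b) * \<bar>\<nu>!a\<bar>"
    by (simp_all add: sgn_if)
  have "ip ?\<nu>' G = ip \<nu> G + (?sa * \<nu>!b - \<nu>!a) * G!a + (?sb * \<nu>!a - \<nu>!b) * G!b"
    using ip_update[of b "\<nu>[a := ?sa * \<nu>!b]" "?sb * \<nu>!a" G]
      ip_update[of a \<nu> "?sa * \<nu>!b" G] a b ab len by simp
  also have "(?sa * \<nu>!b - \<nu>!a) * G!a = (\<bar>\<nu>!b\<bar> - \<bar>\<nu>!a\<bar>) * (sgn (\<nu>!a) * G!a)"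
    unfolding sa by (subst (2) sgn_mult_abs[symmetric]) (simp add: algebra_simps)
  also have "(?sb * \<nu>!a - \<nu>!b) * G!b = - ((\<bar>\<nu>!b\<bar> - \<bar>\<nu>!a\<bar>) * (sgn (\<nu>!b) * G!b))"
    unfolding sb by (subst (2) sgn_mult_abs[symmetric]) (simp add: algebra_simps)
  also have "sgn (\<nu>!a) * G!a = \<bar>G!a\<bar>" using sgn_mult_eq_abs[OF nza face_sign_compatible[OF f a]] .
  also have "sgn (\<nu>!b) * G!b = \<bar>G!b\<bar>" using sgn_mult_eq_abs[OF nzb face_sign_compatible[OF f b]] .
  finally have "ip \<nu> G + (\<bar>\<nu>!b\<bar> - \<bar>\<nu>!a\<bar>) * (\<bar>G!a\<bar> - \<bar>G!b\<bar>) \<le> ip \<nu> G"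
    using le by (simp add: algebra_simps)
  moreover have "(\<bar>\<nu>!b\<bar> - \<bar>\<nu>!a\<bar>) * (\<bar>G!a\<bar> - \<bar>G!b\<bar>) > 0" using lt C by simp
  ultimately show False by simp
qed

section \<open>The face in closed form\<close>

definition count_below :: "nat \<Rightarrow> real list \<Rightarrow> real \<Rightarrow> nat" where
  "count_below n H y = card {k. k < n \<and> \<bar>H!k\<bar> < y}"

definition count_upto :: "nat \<Rightarrow> real list \<Rightarrow> real \<Rightarrow> nat" where
  "count_upto n H y = card {k. k < n \<and> \<bar>H!k\<bar> \<le> y}"

text \<open>The blocks \<open>S\<^sub>t\<close> of the theorem are the intervals \<open>(count_below t, count_upto t]\<close>;
  \<open>rank_face n H\<close> describes \<open>\<Phi>\<^sub>H\<close> through them, coordinate by coordinate.\<close>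

definition rank_face :: "nat \<Rightarrow> real list \<Rightarrow> real list set" where
  "rank_face n H = {\<nu> \<in> Wrho n. \<forall>i<n.
     real (count_below n H \<bar>H!i\<bar>) < \<bar>\<nu>!i\<bar> \<and> \<bar>\<nu>!i\<bar> \<le> real (count_upto n H \<bar>H!i\<bar>) \<and>
     (H!i \<noteq> 0 \<longrightarrow> sgn (\<nu>!i) = sgn (H!i))}"

lemma count_upto_eq:
  "count_upto n H y = count_below n H y + card {k. k < n \<and> \<bar>H!k\<bar> = y}"
proof -
  have "{k. k < n \<and> \<bar>H!k\<bar> \<le> y} = {k. k < n \<and> \<bar>H!k\<bar> < y} \<union> {k. k < n \<and> \<bar>H!k\<bar> = y}"
    by auto
  then show ?thesis unfolding count_upto_def count_below_def by (simp, subst card_Un_disjoint) auto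
qed

lemma count_upto_le_count_below: "y < y' \<Longrightarrow> count_upto n H y \<le> count_below n H y'"
  unfolding count_upto_def count_below_def by (rule card_mono) auto

lemma count_upto_le: "count_upto n H y \<le> n"
proof -
  have "count_upto n H y \<le> card {..<n}" unfolding count_upto_def by (rule card_mono) auto
  then show ?thesis by simp
qed

lemma rank_faceD:
  assumes "\<nu> \<in> rank_face n H" "i < n"
  shows "real (count_below n H \<bar>H!i\<bar>) < \<bar>\<nu>!i\<bar>" "\<bar>\<nu>!i\<bar> \<le> real (count_upto n H \<bar>H!i\<bar>)"
    "H!i \<noteq> 0 \<Longrightarrow> sgn (\<nu>!i) = sgn (H!i)" "\<nu> \<in> Wrho n"
  using assms by (auto simp: rank_face_def)

lemma rank_face_abs_less:
  assumes "\<nu> \<in> rank_face n H" "a < n" "b < n" "\<bar>H!a\<bar> < \<bar>H!b\<bar>"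
  shows "\<bar>\<nu>!a\<bar> < \<bar>\<nu>!b\<bar>"
proof -
  have "\<bar>\<nu>!a\<bar> \<le> real (count_upto n H \<bar>H!a\<bar>)" using rank_faceD[OF assms(1,2)] by simp
  also have "\<dots> \<le> real (count_below n H \<bar>H!b\<bar>)" using count_upto_le_count_below[OF assms(4)] by simp
  also have "\<dots> < \<bar>\<nu>!b\<bar>" using rank_faceD[OF assms(1,3)] by simp
  finally show ?thesis .
qed

lemma rank_face_abs_image:
  assumes "\<nu> \<in> rank_face n H"
  shows "(\<lambda>i. \<bar>\<nu>!i\<bar>) ` {i. i < n \<and> \<bar>H!i\<bar> = y} = real ` {count_below n H y<..count_upto n H y}"
proof (rule card_subset_eq)
  have W: "\<nu> \<in> Wrho n" using assms by (simp add: rank_face_def)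
  show "(\<lambda>i. \<bar>\<nu>!i\<bar>) ` {i. i < n \<and> \<bar>H!i\<bar> = y} \<subseteq> real ` {count_below n H y<..count_upto n H y}"
  proof
    fix x assume "x \<in> (\<lambda>i. \<bar>\<nu>!i\<bar>) ` {i. i < n \<and> \<bar>H!i\<bar> = y}"
    then obtain i where i: "i < n" "\<bar>H!i\<bar> = y" "x = \<bar>\<nu>!i\<bar>" by auto
    obtain m where m: "\<bar>\<nu>!i\<bar> = real m" using Wrho_abs_nat[OF W i(1)] by auto
    have "count_below n H y < m" "m \<le> count_upto n H y" using rank_faceD[OF assms i(1)] i m by auto
    then show "x \<in> real ` {count_below n H y<..count_upto n H y}" using i m by auto
  qed
  have "inj_on (\<lambda>i. \<bar>\<nu>!i\<bar>) {i. i < n \<and> \<bar>H!i\<bar> = y}"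
    using inj_on_abs_Wrho[OF W] by (rule inj_on_subset) auto
  then show "card ((\<lambda>i. \<bar>\<nu>!i\<bar>) ` {i. i < n \<and> \<bar>H!i\<bar> = y}) =
      card (real ` {count_below n H y<..count_upto n H y})"
    using count_upto_eq[of n H y] by (simp add: card_image)
qed simp

lemma face_abs_gt_count_below:
  assumes f: "\<nu> \<in> face n H" and i: "i < n"
  shows "real (count_below n H \<bar>H!i\<bar>) < \<bar>\<nu>!i\<bar>"
proof -
  have W: "\<nu> \<in> Wrho n" using face_Wrho[OF f] .
  have "{k. k < n \<and> \<bar>H!k\<bar> < \<bar>H!i\<bar>} \<subseteq> {k. k < n \<and> \<bar>\<nu>!k\<bar> < \<bar>\<nu>!i\<bar>}"
  proof safe
    fix k assume k: "k < n" "\<bar>H!k\<bar> < \<bar>H!i\<bar>"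
    then have "\<bar>\<nu>!k\<bar> \<noteq> \<bar>\<nu>!i\<bar>" using Wrho_abs_eqD[OF W k(1) i] by auto
    moreover have "\<not> \<bar>\<nu>!i\<bar> < \<bar>\<nu>!k\<bar>" using face_abs_mono[OF f i k(1)] k(2) by auto
    ultimately show "\<bar>\<nu>!k\<bar> < \<bar>\<nu>!i\<bar>" by auto
  qed
  then have "count_below n H \<bar>H!i\<bar> \<le> card {k. k < n \<and> \<bar>\<nu>!k\<bar> < \<bar>\<nu>!i\<bar>}"
    unfolding count_below_def by (rule card_mono[rotated]) simp
  then show ?thesis using card_abs_Wrho(2)[OF W i] by linarith
qed

lemma face_abs_le_count_upto:
  assumes f: "\<nu> \<in> face n H" and i: "i < n"
  shows "\<bar>\<nu>!i\<bar> \<le> real (count_upto n H \<bar>H!i\<bar>)"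
proof -
  have W: "\<nu> \<in> Wrho n" using face_Wrho[OF f] .
  have "{k. k < n \<and> \<bar>\<nu>!k\<bar> \<le> \<bar>\<nu>!i\<bar>} \<subseteq> {k. k < n \<and> \<bar>H!k\<bar> \<le> \<bar>H!i\<bar>}"
  proof safe
    fix k assume k: "k < n" "\<bar>\<nu>!k\<bar> \<le> \<bar>\<nu>!i\<bar>"
    show "\<bar>H!k\<bar> \<le> \<bar>H!i\<bar>"
    proof (cases "k = i")
      case False
      then have "\<bar>\<nu>!k\<bar> \<noteq> \<bar>\<nu>!i\<bar>" using Wrho_abs_eqD[OF W k(1) i] by auto
      then show ?thesis using face_abs_mono[OF f k(1) i] k(2) by auto
    qed simp
  qed
  then have "card {k. k < n \<and> \<bar>\<nu>!k\<bar> \<le> \<bar>\<nu>!i\<bar>} \<le> count_upto n H \<bar>H!i\<bar>"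
    unfolding count_upto_def by (rule card_mono[rotated]) simp
  then show ?thesis using card_abs_Wrho(1)[OF W i] by linarith
qed

lemma face_subset_rank_face: "face n H \<subseteq> rank_face n H"
proof
  fix \<nu> assume f: "\<nu> \<in> face n H"
  have W: "\<nu> \<in> Wrho n" using face_Wrho[OF f] .
  have "sgn (\<nu>!i) = sgn (H!i)" if "i < n" "H!i \<noteq> 0" for i
    using face_sign_compatible[OF f that(1)] Wrho_nth_nonzero[OF W that(1)] that(2)
    by (auto simp: sgn_if zero_le_mult_iff)
  then show "\<nu> \<in> rank_face n H"
    unfolding rank_face_def using W face_abs_gt_count_below[OF f] face_abs_le_count_upto[OF f]
    by auto
qed

lemma mult_eq_abs_mult_abs_if_sgn_eq: "sgn x = sgn y \<Longrightarrow> x * y = \<bar>x\<bar> * \<bar>y\<bar>"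
  for x y :: real
  by (auto simp: sgn_if abs_if split: if_splits)

lemma ip_rank_face:
  assumes \<nu>: "\<nu> \<in> rank_face n H"
  shows "ip \<nu> H = (\<Sum>y\<in>(\<lambda>i. \<bar>H!i\<bar>) ` {..<n}. y * \<Sum>(real ` {count_below n H y<..count_upto n H y}))"
proof -
  have W: "\<nu> \<in> Wrho n" using \<nu> by (simp add: rank_face_def)
  have "ip \<nu> H = (\<Sum>i<n. \<bar>\<nu>!i\<bar> * \<bar>H!i\<bar>)"
    unfolding ip_def length_Wrho[OF W]
    using rank_faceD(3)[OF \<nu>] by (intro sum.cong refl) (force intro: mult_eq_abs_mult_abs_if_sgn_eq)
  also have "\<dots> = (\<Sum>y\<in>(\<lambda>i. \<bar>H!i\<bar>) ` {..<n}. \<Sum>i\<in>{x. x \<in> {..<n} \<and> \<bar>H!x\<bar> = y}. \<bar>\<nu>!i\<bar> * \<bar>H!i\<bar>)"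
    by (rule sum.image_gen) simp
  also have "\<dots> = (\<Sum>y\<in>(\<lambda>i. \<bar>H!i\<bar>) ` {..<n}. y * \<Sum>(real ` {count_below n H y<..count_upto n H y}))"
  proof (rule sum.cong[OF refl])
    fix y
    have inj: "inj_on (\<lambda>i. \<bar>\<nu>!i\<bar>) {i. i < n \<and> \<bar>H!i\<bar> = y}"
      using inj_on_abs_Wrho[OF W] by (rule inj_on_subset) auto
    have "(\<Sum>i\<in>{x. x \<in> {..<n} \<and> \<bar>H!x\<bar> = y}. \<bar>\<nu>!i\<bar> * \<bar>H!i\<bar>) = y * (\<Sum>i\<in>{i. i < n \<and> \<bar>H!i\<bar> = y}. \<bar>\<nu>!i\<bar>)"
      by (simp add: sum_distrib_left mult.commute)
    also have "(\<Sum>i\<in>{i. i < n \<and> \<bar>H!i\<bar> = y}. \<bar>\<nu>!i\<bar>) = \<Sum>((\<lambda>i. \<bar>\<nu>!i\<bar>) ` {i. i < n \<and> \<bar>H!i\<bar> = y})"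
      using sum.reindex[OF inj, of id] by simp
    also have "\<dots> = \<Sum>(real ` {count_below n H y<..count_upto n H y})"
      using rank_face_abs_image[OF \<nu>] by simp
    finally show "(\<Sum>i\<in>{x. x \<in> {..<n} \<and> \<bar>H!x\<bar> = y}. \<bar>\<nu>!i\<bar> * \<bar>H!i\<bar>)
      = y * \<Sum>(real ` {count_below n H y<..count_upto n H y})" .
  qed
  finally show ?thesis .
qed

lemma face_eq_rank_face: "face n H = rank_face n H"
proof
  show "face n H \<subseteq> rank_face n H" by (rule face_subset_rank_face)
  show "rank_face n H \<subseteq> face n H"
  proof
    fix \<nu> assume \<nu>: "\<nu> \<in> rank_face n H"
    obtain \<nu>0 where f0: "\<nu>0 \<in> face n H" using face_nonempty by blast
    have "ip \<nu> H = ip \<nu>0 H"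
      using ip_rank_face[OF \<nu>] ip_rank_face[OF face_subset_rank_face[THEN subsetD, OF f0]] by simp
    then show "\<nu> \<in> face n H" using f0 \<nu> by (auto simp: face_def rank_face_def)
  qed
qed

section \<open>The face is a \<open>W\<^sub>l\<close>-orbit\<close>

definition pair_root :: "nat \<Rightarrow> nat \<Rightarrow> nat \<Rightarrow> real \<Rightarrow> real \<Rightarrow> real list" where
  "pair_root n i j a b = vadd (vscale a (evec n i)) (vscale b (evec n j))"

definition long_root :: "nat \<Rightarrow> nat \<Rightarrow> real \<Rightarrow> real list" where
  "long_root n i c = vscale c (evec n i)"

lemma roots_cases:
  assumes "\<alpha> \<in> roots n"
  obtains i j a b where "\<alpha> = pair_root n i j a b" "i < n" "j < n" "i \<noteq> j"
    "a = 1 \<or> a = -1" "b = 1 \<or> b = -1"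
  | i c where "\<alpha> = long_root n i c" "i < n" "c = 2 \<or> c = -2"
  using assms unfolding roots_def pair_root_def long_root_def by blast

lemma pair_root_in_roots:
  "i < n \<Longrightarrow> j < n \<Longrightarrow> i \<noteq> j \<Longrightarrow> a = 1 \<or> a = -1 \<Longrightarrow> b = 1 \<or> b = -1 \<Longrightarrow> pair_root n i j a b \<in> roots n"
  unfolding roots_def pair_root_def by blast

lemma long_root_in_roots: "i < n \<Longrightarrow> long_root n i 2 \<in> roots n"
  unfolding roots_def long_root_def by blast

lemma length_pair_root [simp]: "length (pair_root n i j a b) = n"
  by (simp add: pair_root_def vadd_def vscale_def evec_def)

lemma length_long_root [simp]: "length (long_root n i c) = n"
  by (simp add: long_root_def vscale_def evec_def)

lemma pair_root_nth:
  "k < n \<Longrightarrow> pair_root n i j a b ! k = (if k = i then a else 0) + (if k = j then b else 0)"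
  by (simp add: pair_root_def vadd_def vscale_def evec_def)

lemma long_root_nth: "k < n \<Longrightarrow> long_root n i c ! k = (if k = i then c else 0)"
  by (simp add: long_root_def vscale_def evec_def)

lemma ip_pair_root:
  assumes "i < n" "j < n" "i \<noteq> j"
  shows "ip (pair_root n i j a b) x = a * x!i + b * x!j"
proof -
  have "ip (pair_root n i j a b) x =
      (\<Sum>k<n. (if k = i then a * x!i else 0) + (if k = j then b * x!j else 0))"
    unfolding ip_def length_pair_root by (rule sum.cong) (auto simp: pair_root_nth algebra_simps)
  then show ?thesis using assms by (simp add: sum.distrib)
qed

lemma ip_long_root:
  assumes "i < n"
  shows "ip (long_root n i c) x = c * x!i"
proof -
  have "ip (long_root n i c) x = (\<Sum>k<n. if k = i then c * x!i else 0)"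
    unfolding ip_def length_long_root by (rule sum.cong) (auto simp: long_root_nth)
  then show ?thesis using assms by simp
qed

lemma reflection_pair_root:
  assumes len: "length x = n" and ij: "i < n" "j < n" "i \<noteq> j"
    and a: "a = 1 \<or> a = -1" and b: "b = 1 \<or> b = -1"
  shows "reflection (pair_root n i j a b) x = x[i := - a * b * x!j, j := - a * b * x!i]"
proof (rule nth_equalityI)
  have norm: "ip (pair_root n i j a b) (pair_root n i j a b) = 2"
    using a b ij by (auto simp: ip_pair_root pair_root_nth)
  have ipx: "ip x (pair_root n i j a b) = a * x!i + b * x!j"
    using ip_commute[of x "pair_root n i j a b"] ip_pair_root[OF ij] len by simp
  fix k assume "k < length (reflection (pair_root n i j a b) x)"
  then have k: "k < n" by (simp add: reflection_def vadd_def vscale_def len)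
  show "reflection (pair_root n i j a b) x ! k = x[i := - a * b * x!j, j := - a * b * x!i] ! k"
    using k len ij a b unfolding reflection_def norm ipx
    by (auto simp: vadd_def vscale_def pair_root_nth nth_list_update field_simps)
qed (simp add: reflection_def vadd_def vscale_def len)

lemma reflection_long_root:
  assumes len: "length x = n" and i: "i < n" and c: "c = 2 \<or> c = -2"
  shows "reflection (long_root n i c) x = x[i := - x!i]"
proof (rule nth_equalityI)
  have norm: "ip (long_root n i c) (long_root n i c) = 4"
    using c i by (auto simp: ip_long_root long_root_nth)
  have ipx: "ip x (long_root n i c) = c * x!i"
    using ip_commute[of x "long_root n i c"] ip_long_root[OF i] len by simp
  fix k assume "k < length (reflection (long_root n i c) x)"
  then have k: "k < n" by (simp add: reflection_def vadd_def vscale_def len)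
  show "reflection (long_root n i c) x ! k = x[i := - x!i] ! k"
    using k len i c unfolding reflection_def norm ipx
    by (auto simp: vadd_def vscale_def long_root_nth nth_list_update)
qed (simp add: reflection_def vadd_def vscale_def len)

lemma reflection_Wrho:
  assumes \<alpha>: "\<alpha> \<in> roots n" and x: "x \<in> Wrho n"
  shows "reflection \<alpha> x \<in> Wrho n"
  using \<alpha>
proof (cases rule: roots_cases)
  case (1 i j a b)
  then show ?thesis
    using reflection_pair_root[OF length_Wrho[OF x] 1(2-6)]
      Wrho_swap[OF x 1(2-4), of "- a * b" "- a * b"]
    by auto
next
  case (2 i c)
  then show ?thesis using reflection_long_root[OF length_Wrho[OF x] 2(2-3)] Wrho_flip[OF x 2(2)]
    by simp
qed

lemma reflection_face:
  assumes \<alpha>: "\<alpha> \<in> roots n" and h: "ip \<alpha> H = 0" and f: "x \<in> face n H"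
  shows "reflection \<alpha> x \<in> face n H"
proof -
  have W: "x \<in> Wrho n" using face_Wrho[OF f] .
  have "length \<alpha> = n" using \<alpha> by (cases rule: roots_cases) auto
  then have "ip (reflection \<alpha> x) H = ip x H"
    unfolding reflection_def using ip_vadd_vscale[OF length_Wrho[OF W]] h by simp
  then show ?thesis using f reflection_Wrho[OF \<alpha> W] by (simp add: face_def)
qed

lemma Wl_face: "w \<in> Wl n H \<Longrightarrow> x \<in> face n H \<Longrightarrow> w x \<in> face n H"
  by (induction rule: Wl.induct) (auto intro: reflection_face)

definition mismatches :: "nat \<Rightarrow> real list \<Rightarrow> real list \<Rightarrow> nat set" where
  "mismatches n x y = {k. k < n \<and> x!k \<noteq> y!k}"

lemma card_mismatches_less:
  assumes "i < n" "x!i \<noteq> y!i" "x'!i = y!i"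
    and "\<And>k. k < n \<Longrightarrow> k \<noteq> i \<Longrightarrow> x'!k \<noteq> y!k \<Longrightarrow> x!k \<noteq> y!k"
  shows "card (mismatches n x' y) < card (mismatches n x y)"
proof -
  have "mismatches n x' y \<subseteq> mismatches n x y - {i}"
    using assms by (auto simp: mismatches_def)
  then have "card (mismatches n x' y) \<le> card (mismatches n x y - {i})"
    by (rule card_mono[rotated]) (simp add: mismatches_def)
  also have "\<dots> < card (mismatches n x y)"
    using assms(1,2) by (intro card_Diff1_less) (simp_all add: mismatches_def)
  finally show ?thesis .
qed

lemma face_abs_eq_imp_level_eq:
  assumes "\<mu> \<in> face n H" "\<nu> \<in> face n H" "i < n" "j < n" "\<bar>\<nu>!j\<bar> = \<bar>\<mu>!i\<bar>"
  shows "\<bar>H!i\<bar> = \<bar>H!j\<bar>"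
proof -
  have \<mu>: "\<mu> \<in> rank_face n H" and \<nu>: "\<nu> \<in> rank_face n H"
    using assms(1,2) face_eq_rank_face by auto
  have "\<not> \<bar>H!i\<bar> < \<bar>H!j\<bar>"
    using rank_faceD(1,2)[OF \<mu> assms(3)] rank_faceD(1,2)[OF \<nu> assms(4)]
      count_upto_le_count_below[of "\<bar>H!i\<bar>" "\<bar>H!j\<bar>" n H] assms(5) by linarith
  moreover have "\<not> \<bar>H!j\<bar> < \<bar>H!i\<bar>"
    using rank_faceD(1,2)[OF \<mu> assms(3)] rank_faceD(1,2)[OF \<nu> assms(4)]
      count_upto_le_count_below[of "\<bar>H!j\<bar>" "\<bar>H!i\<bar>" n H] assms(5) by linarith
  ultimately show ?thesis by linarith
qed

lemma face_opposite_imp_level_zero: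
  assumes \<mu>: "\<mu> \<in> face n H" and \<nu>: "\<nu> \<in> face n H" and i: "i < n" and neg: "\<nu>!i = - \<mu>!i"
  shows "H!i = 0"
proof (rule ccontr)
  assume "H!i \<noteq> 0"
  then have "sgn (\<nu>!i) = sgn (\<mu>!i)"
    using \<mu> \<nu> rank_faceD(3)[OF _ i] face_eq_rank_face by (metis (no_types, lifting))
  moreover have "\<mu>!i \<noteq> 0" using Wrho_nth_nonzero[OF face_Wrho[OF \<mu>] i] .
  ultimately show False using neg by (auto simp: sgn_if split: if_splits)
qed

lemma face_same_abs_imp_level_signed_eq:
  assumes \<mu>: "\<mu> \<in> face n H" and \<nu>: "\<nu> \<in> face n H" and i: "i < n" and j: "j < n"
    and abs: "\<bar>\<nu>!j\<bar> = \<bar>\<mu>!i\<bar>"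
  shows "H!i = sgn (\<mu>!i) * sgn (\<nu>!j) * H!j"
proof -
  have level: "\<bar>H!i\<bar> = \<bar>H!j\<bar>" by (rule face_abs_eq_imp_level_eq[OF \<mu> \<nu> i j abs])
  show ?thesis
  proof (cases "H!i = 0")
    case False
    then have "H!j \<noteq> 0" using level by auto
    then have "sgn (\<mu>!i) = sgn (H!i)" "sgn (\<nu>!j) = sgn (H!j)"
      using False \<mu> \<nu> rank_faceD(3)[OF _ i] rank_faceD(3)[OF _ j] face_eq_rank_face by blast+
    then show ?thesis using level False by (simp add: sgn_if abs_if split: if_splits)
  qed (use level in simp)
qed

text \<open>Two distinct points of the face: a reflection in \<open>W\<^sub>l\<close> moves the second one closer
  to the first, either flipping a sign (possible only where \<open>H_i = 0\<close>) or exchanging two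
  coordinates with the same \<open>\<bar>H_i\<bar>\<close>.\<close>

lemma face_reflection_closer:
  assumes \<mu>: "\<mu> \<in> face n H" and \<nu>: "\<nu> \<in> face n H" and ne: "\<nu> \<noteq> \<mu>"
  obtains \<alpha> where "\<alpha> \<in> roots n" "ip \<alpha> H = 0"
    "card (mismatches n (reflection \<alpha> \<nu>) \<mu>) < card (mismatches n \<nu> \<mu>)"
proof -
  have W\<mu>: "\<mu> \<in> Wrho n" and W\<nu>: "\<nu> \<in> Wrho n" using face_Wrho \<mu> \<nu> by auto
  have l\<nu>: "length \<nu> = n" using length_Wrho W\<nu> by auto
  obtain i where i: "i < n" "\<nu>!i \<noteq> \<mu>!i" using ne l\<nu> length_Wrho[OF W\<mu>] nth_equalityI by metis
  have "\<bar>\<mu>!i\<bar> \<in> (\<lambda>k. \<bar>\<nu>!k\<bar>) ` {..<n}"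
    using W\<mu> W\<nu> i(1) by (auto simp: mem_Wrho_iff)
  then obtain j where j: "j < n" "\<bar>\<nu>!j\<bar> = \<bar>\<mu>!i\<bar>" by auto
  have nz\<mu>: "\<mu>!i \<noteq> 0" using Wrho_nth_nonzero[OF W\<mu> i(1)] .
  show thesis
  proof (cases "j = i")
    case True
    then have neg: "\<nu>!i = - \<mu>!i" using j i by (auto simp: abs_if split: if_splits)
    have "H!i = 0" by (rule face_opposite_imp_level_zero[OF \<mu> \<nu> i(1) neg])
    then have "ip (long_root n i 2) H = 0" using ip_long_root[OF i(1)] by simp
    moreover have "reflection (long_root n i 2) \<nu> = \<nu>[i := \<mu>!i]"
      using reflection_long_root[OF l\<nu> i(1)] neg by simp
    then have "card (mismatches n (reflection (long_root n i 2) \<nu>) \<mu>) < card (mismatches n \<nu> \<mu>)"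
      using i l\<nu> by (intro card_mismatches_less[of i]) auto
    ultimately show thesis using that long_root_in_roots[OF i(1)] by blast
  next
    case False
    then have ij: "i \<noteq> j" by simp
    define s where "s = sgn (\<mu>!i) * sgn (\<nu>!j)"
    have nz\<nu>: "\<nu>!j \<noteq> 0" using Wrho_nth_nonzero[OF W\<nu> j(1)] .
    have s_pm: "s = 1 \<or> s = -1" using nz\<mu> nz\<nu> by (auto simp: s_def sgn_if)
    have s\<nu>: "s * \<nu>!j = \<mu>!i"
      using j(2) nz\<nu> by (simp add: s_def sgn_if abs_if split: if_splits)
    have "H!i = s * H!j" unfolding s_def by (rule face_same_abs_imp_level_signed_eq[OF \<mu> \<nu> i(1) j])
    then have "ip (pair_root n i j 1 (- s)) H = 0" using ip_pair_root[OF i(1) j(1) ij] by simp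
    moreover have refl: "reflection (pair_root n i j 1 (- s)) \<nu> = \<nu>[i := \<mu>!i, j := s * \<nu>!i]"
      using reflection_pair_root[OF l\<nu> i(1) j(1) ij] s_pm s\<nu> by auto
    have "\<nu>!j \<noteq> \<mu>!j"
      using Wrho_abs_eqD[OF W\<mu> i(1) j(1)] False j(2) by auto
    then have "card (mismatches n (reflection (pair_root n i j 1 (- s)) \<nu>) \<mu>)
        < card (mismatches n \<nu> \<mu>)"
      unfolding refl using i j(1) l\<nu> ij
      by (intro card_mismatches_less[of i]) (auto simp: nth_list_update split: if_splits)
    moreover have "pair_root n i j 1 (- s) \<in> roots n"
      using pair_root_in_roots[OF i(1) j(1) ij, of 1 "- s"] s_pm by auto
    ultimately show thesis using that by blast
  qed
qed

lemma Wl_comp: "w \<in> Wl n H \<Longrightarrow> w' \<in> Wl n H \<Longrightarrow> w \<circ> w' \<in> Wl n H"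
proof (induction rule: Wl.induct)
  case (Wl_step \<alpha> w)
  then have "reflection \<alpha> \<circ> (w \<circ> w') \<in> Wl n H" by (blast intro: Wl.Wl_step)
  then show ?case by (simp only: comp_assoc)
qed simp

lemma face_in_Wl_orbit:
  assumes \<mu>: "\<mu> \<in> face n H" and \<nu>: "\<nu> \<in> face n H"
  shows "\<exists>w\<in>Wl n H. w \<nu> = \<mu>"
  using \<nu>
proof (induction "card (mismatches n \<nu> \<mu>)" arbitrary: \<nu> rule: less_induct)
  case less
  show ?case
  proof (cases "\<nu> = \<mu>")
    case True
    then show ?thesis using Wl_id by (intro bexI[of _ id]) simp_all
  next
    case False
    obtain \<alpha> where \<alpha>: "\<alpha> \<in> roots n" "ip \<alpha> H = 0"
      "card (mismatches n (reflection \<alpha> \<nu>) \<mu>) < card (mismatches n \<nu> \<mu>)"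
      using face_reflection_closer[OF \<mu> less.prems False] by blast
    obtain w where "w \<in> Wl n H" "w (reflection \<alpha> \<nu>) = \<mu>"
      using less.hyps[OF \<alpha>(3) reflection_face[OF \<alpha>(1,2) less.prems]] by blast
    moreover have "reflection \<alpha> \<in> Wl n H" using Wl_step[OF \<alpha>(1,2) Wl_id] by simp
    ultimately show ?thesis using Wl_comp by (intro bexI[of _ "w \<circ> reflection \<alpha>"]) simp_all
  qed
qed

lemma face_eq_Wl_orbit:
  assumes "\<rho>'' \<in> face n H"
  shows "face n H = (\<lambda>w. w \<rho>'') ` Wl n H"
proof
  show "(\<lambda>w. w \<rho>'') ` Wl n H \<subseteq> face n H" using Wl_face[OF _ assms] by blast
  show "face n H \<subseteq> (\<lambda>w. w \<rho>'') ` Wl n H"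
  proof
    fix \<mu> assume "\<mu> \<in> face n H"
    then obtain w where "w \<in> Wl n H" "w \<rho>'' = \<mu>" using face_in_Wl_orbit[OF _ assms] by blast
    then show "\<mu> \<in> (\<lambda>w. w \<rho>'') ` Wl n H" by blast
  qed
qed

section \<open>Two dominant points of the face\<close>

lemma face_Int_Ck: "face n H \<inter> Ck n = {\<mu> \<in> face n H. \<forall>i j. i < j \<and> j < n \<longrightarrow> \<mu> ! j < \<mu> ! i}"
proof safe
  fix \<mu> i j assume f: "\<mu> \<in> face n H" and c: "\<mu> \<in> Ck n" and ij: "i < j" "j < n"
  have "\<mu>!j \<le> \<mu>!i" using c ij by (auto simp: Ck_def)
  moreover have "\<mu>!j \<noteq> \<mu>!i" using Wrho_abs_eqD[OF face_Wrho[OF f], of i j] ij by auto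
  ultimately show "\<mu>!j < \<mu>!i" by simp
next
  fix \<mu> assume f: "\<mu> \<in> face n H" and s: "\<forall>i j. i < j \<and> j < n \<longrightarrow> \<mu> ! j < \<mu> ! i"
  show "\<mu> \<in> Ck n" unfolding Ck_def using s length_Wrho[OF face_Wrho[OF f]]
    by (auto intro: less_imp_le)
qed

lemma rank_face_intro:
  assumes len: "length \<nu> = n"
    and bounds: "\<And>i. i < n \<Longrightarrow>
      real (count_below n H \<bar>H!i\<bar>) < \<bar>\<nu>!i\<bar> \<and> \<bar>\<nu>!i\<bar> \<le> real (count_upto n H \<bar>H!i\<bar>)"
    and nat: "\<And>i. i < n \<Longrightarrow> \<exists>m::nat. \<bar>\<nu>!i\<bar> = real m"
    and sgn: "\<And>i. i < n \<Longrightarrow> H!i \<noteq> 0 \<Longrightarrow> sgn (\<nu>!i) = sgn (H!i)"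
    and inj: "\<And>i j. i < n \<Longrightarrow> j < n \<Longrightarrow> i \<noteq> j \<Longrightarrow> \<bar>H!i\<bar> = \<bar>H!j\<bar> \<Longrightarrow> \<bar>\<nu>!i\<bar> \<noteq> \<bar>\<nu>!j\<bar>"
  shows "\<nu> \<in> rank_face n H"
proof -
  have less: "\<bar>\<nu>!a\<bar> < \<bar>\<nu>!b\<bar>" if "a < n" "b < n" "\<bar>H!a\<bar> < \<bar>H!b\<bar>" for a b
    using bounds[OF that(1)] bounds[OF that(2)] count_upto_le_count_below[OF that(3), of n H]
    by linarith
  have "inj_on (\<lambda>i. \<bar>\<nu>!i\<bar>) {..<n}"
  proof (rule inj_onI, rule ccontr)
    fix i j assume "i \<in> {..<n}" "j \<in> {..<n}" "\<bar>\<nu>!i\<bar> = \<bar>\<nu>!j\<bar>" "i \<noteq> j"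
    then show False using inj[of i j] less[of i j] less[of j i] by (cases "\<bar>H!i\<bar> = \<bar>H!j\<bar>") force+
  qed
  moreover have "(\<lambda>i. \<bar>\<nu>!i\<bar>) ` {..<n} \<subseteq> real ` {1..n}"
  proof
    fix x assume "x \<in> (\<lambda>i. \<bar>\<nu>!i\<bar>) ` {..<n}"
    then obtain i where i: "i < n" "x = \<bar>\<nu>!i\<bar>" by auto
    obtain m where m: "\<bar>\<nu>!i\<bar> = real m" using nat[OF i(1)] by auto
    have "real (count_below n H \<bar>H!i\<bar>) < real m" "real m \<le> real (count_upto n H \<bar>H!i\<bar>)"
      using bounds[OF i(1)] m by auto
    then have "1 \<le> m" "m \<le> n" using count_upto_le[of n H "\<bar>H!i\<bar>"] by linarith+
    then show "x \<in> real ` {1..n}" using i m by auto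
  qed
  ultimately have "(\<lambda>i. \<bar>\<nu>!i\<bar>) ` {..<n} = real ` {1..n}"
    by (intro card_subset_eq) (simp_all add: card_image)
  then have "\<nu> \<in> Wrho n" using len by (simp add: mem_Wrho_iff)
  then show ?thesis unfolding rank_face_def using bounds sgn by auto
qed

lemma rank_face_in_Ck:
  assumes \<nu>: "\<nu> \<in> rank_face n H" and H: "H \<in> Ck n"
    and same: "\<And>i j. i < j \<Longrightarrow> j < n \<Longrightarrow> H!i = H!j \<Longrightarrow> \<nu>!j < \<nu>!i"
  shows "\<nu> \<in> Ck n"
proof -
  have "\<nu>!j < \<nu>!i" if ij: "i < j" "j < n" for i j
  proof (cases "H!i = H!j")
    case False
    then have lt: "H!j < H!i" using H ij by (force simp: Ck_def)
    have i: "i < n" using ij by simp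
    note sg = rank_faceD(3)[OF \<nu>]
    consider "H!i > 0" "H!j \<ge> 0" | "H!j < 0" "H!i \<le> 0" | "H!i > 0" "H!j < 0" using lt by linarith
    then show ?thesis
    proof cases
      case 1
      then have "\<bar>H!j\<bar> < \<bar>H!i\<bar>" using lt by simp
      then have "\<bar>\<nu>!j\<bar> < \<bar>\<nu>!i\<bar>" using rank_face_abs_less[OF \<nu> ij(2) i] by simp
      moreover have "\<nu>!i > 0" using sg[OF i] 1 by (auto simp: sgn_if split: if_splits)
      ultimately show ?thesis by linarith
    next
      case 2
      then have "\<bar>H!i\<bar> < \<bar>H!j\<bar>" using lt by simp
      then have "\<bar>\<nu>!i\<bar> < \<bar>\<nu>!j\<bar>" using rank_face_abs_less[OF \<nu> i ij(2)] by simp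
      moreover have "\<nu>!j < 0" using sg[OF ij(2)] 2 by (auto simp: sgn_if split: if_splits)
      ultimately show ?thesis by linarith
    next
      case 3
      have "\<nu>!i > 0" using sg[OF i] 3 by (auto simp: sgn_if split: if_splits)
      moreover have "\<nu>!j < 0" using sg[OF ij(2)] 3 by (auto simp: sgn_if split: if_splits)
      ultimately show ?thesis by simp
    qed
  qed (use same ij in simp)
  moreover have "length \<nu> = n" using \<nu> by (simp add: rank_face_def length_Wrho)
  ultimately show ?thesis unfolding Ck_def by (auto intro: less_imp_le)
qed

definition count_before :: "real list \<Rightarrow> nat \<Rightarrow> nat" where
  "count_before H i = card {j. j < i \<and> H!j = H!i}"

definition count_after :: "nat \<Rightarrow> real list \<Rightarrow> nat \<Rightarrow> nat" where
  "count_after n H i = card {j. i < j \<and> j < n \<and> H!j = H!i}"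

definition count_value :: "nat \<Rightarrow> real list \<Rightarrow> real \<Rightarrow> nat" where
  "count_value n H v = card {j. j < n \<and> H!j = v}"

text \<open>Two points of \<open>rank_face n H \<inter> Ck n\<close> (for decreasing \<open>H\<close>): in each level
  \<open>\<bar>H_i\<bar> = y\<close>, \<open>dom_pos\<close> gives the coordinates with \<open>H_i \<ge> 0\<close> the largest absolute values
  of the interval and makes them positive, \<open>dom_neg\<close> gives those with \<open>H_i \<le> 0\<close> the
  largest absolute values and makes them negative.  Comparing the two recovers the signs
  and levels of \<open>H\<close>.\<close>

definition dom_pos :: "nat \<Rightarrow> real list \<Rightarrow> real list" where
  "dom_pos n H = map (\<lambda>i.
     if H!i \<ge> 0 then real (count_upto n H \<bar>H!i\<bar>) - real (count_before H i)
     else - (real (count_below n H \<bar>H!i\<bar>) + 1 + real (count_before H i))) [0..<n]"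

definition dom_neg :: "nat \<Rightarrow> real list \<Rightarrow> real list" where
  "dom_neg n H = map (\<lambda>i.
     if H!i > 0 then real (count_below n H \<bar>H!i\<bar>) + 1 + real (count_after n H i)
     else - (real (count_upto n H \<bar>H!i\<bar>) - real (count_after n H i))) [0..<n]"

lemma count_before_less: "i < n \<Longrightarrow> count_before H i < count_value n H (H!i)"
  unfolding count_before_def count_value_def by (rule psubset_card_mono) auto

lemma count_after_less: "i < n \<Longrightarrow> count_after n H i < count_value n H (H!i)"
  unfolding count_after_def count_value_def by (rule psubset_card_mono) auto

lemma count_before_mono: "i < j \<Longrightarrow> H!i = H!j \<Longrightarrow> count_before H i < count_before H j"
  unfolding count_before_def by (rule psubset_card_mono) auto

lemma count_after_mono:
  "i < j \<Longrightarrow> j < n \<Longrightarrow> H!i = H!j \<Longrightarrow> count_after n H j < count_after n H i"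
  unfolding count_after_def by (rule psubset_card_mono) auto

lemma count_below_le_count_upto: "count_below n H y \<le> count_upto n H y"
  using count_upto_eq[of n H y] by simp

lemma count_value_le: "count_value n H v \<le> count_upto n H \<bar>v\<bar> - count_below n H \<bar>v\<bar>"
proof -
  have "count_value n H v \<le> card {k. k < n \<and> \<bar>H!k\<bar> = \<bar>v\<bar>}"
    unfolding count_value_def by (rule card_mono) auto
  then show ?thesis using count_upto_eq[of n H "\<bar>v\<bar>"] by simp
qed

lemma count_value_opposite_le:
  assumes "v \<noteq> 0"
  shows "count_value n H v + count_value n H (-v) \<le> count_upto n H \<bar>v\<bar> - count_below n H \<bar>v\<bar>"
proof -
  have "count_value n H v + count_value n H (-v)
      = card ({j. j < n \<and> H!j = v} \<union> {j. j < n \<and> H!j = -v})"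
    unfolding count_value_def using assms by (subst card_Un_disjoint) auto
  also have "\<dots> \<le> card {k. k < n \<and> \<bar>H!k\<bar> = \<bar>v\<bar>}" by (rule card_mono) auto
  finally show ?thesis using count_upto_eq[of n H "\<bar>v\<bar>"] by simp
qed

lemma dom_pos_nth:
  "i < n \<Longrightarrow> dom_pos n H ! i =
     (if H!i \<ge> 0 then real (count_upto n H \<bar>H!i\<bar>) - real (count_before H i)
      else - (real (count_below n H \<bar>H!i\<bar>) + 1 + real (count_before H i)))"
  by (simp add: dom_pos_def)

lemma dom_neg_nth:
  "i < n \<Longrightarrow> dom_neg n H ! i =
     (if H!i > 0 then real (count_below n H \<bar>H!i\<bar>) + 1 + real (count_after n H i)
      else - (real (count_upto n H \<bar>H!i\<bar>) - real (count_after n H i)))"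
  by (simp add: dom_neg_def)

lemma dom_pos_abs_less_opposite:
  assumes a: "a < n" and b: "b < n" and pos: "H!a > 0" and opp: "H!b = - H!a"
  shows "\<bar>dom_pos n H ! b\<bar> < \<bar>dom_pos n H ! a\<bar>"
proof -
  have "count_before H a < count_value n H (H!a)" "count_before H b < count_value n H (- H!a)"
    using count_before_less[OF a, of H] count_before_less[OF b, of H] opp by simp_all
  moreover have "count_value n H (H!a) + count_value n H (- H!a)
      \<le> count_upto n H \<bar>H!a\<bar> - count_below n H \<bar>H!a\<bar>"
    using count_value_opposite_le[of "H!a" n H] pos by simp
  ultimately show ?thesis
    using count_below_le_count_upto[of n H "\<bar>H!a\<bar>"] pos opp
    unfolding dom_pos_nth[OF a] dom_pos_nth[OF b] by simp
qed

lemma dom_neg_abs_less_opposite: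
  assumes a: "a < n" and b: "b < n" and pos: "H!a > 0" and opp: "H!b = - H!a"
  shows "\<bar>dom_neg n H ! a\<bar> < \<bar>dom_neg n H ! b\<bar>"
proof -
  have "count_after n H a < count_value n H (H!a)" "count_after n H b < count_value n H (- H!a)"
    using count_after_less[OF a, of H] count_after_less[OF b, of H] opp by simp_all
  moreover have "count_value n H (H!a) + count_value n H (- H!a)
      \<le> count_upto n H \<bar>H!a\<bar> - count_below n H \<bar>H!a\<bar>"
    using count_value_opposite_le[of "H!a" n H] pos by simp
  ultimately show ?thesis
    using count_below_le_count_upto[of n H "\<bar>H!a\<bar>"] pos opp
    unfolding dom_neg_nth[OF a] dom_neg_nth[OF b] by simp
qed

lemma dom_pos_abs_neq:
  assumes i: "i < n" and j: "j < n" and ij: "i \<noteq> j" and level: "\<bar>H!i\<bar> = \<bar>H!j\<bar>"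
  shows "\<bar>dom_pos n H ! i\<bar> \<noteq> \<bar>dom_pos n H ! j\<bar>"
proof (cases "H!i = H!j")
  case True
  have "count_before H i \<noteq> count_before H j"
    using count_before_mono[of i j H] count_before_mono[of j i H] True ij by fastforce
  moreover have "count_before H i < count_value n H (H!i)"
    and "count_before H j < count_value n H (H!i)"
    using count_before_less[OF i, of H] count_before_less[OF j, of H] True by simp_all
  ultimately show ?thesis
    using count_value_le[of n H "H!i"] True unfolding dom_pos_nth[OF i] dom_pos_nth[OF j] by auto
next
  case False
  then have opp: "H!j = - H!i" and nz: "H!i \<noteq> 0" using level by (auto simp: abs_if split: if_splits)
  show ?thesis
  proof (cases "H!i > 0")
    case True
    then show ?thesis using dom_pos_abs_less_opposite[OF i j True opp] by simp
  next
    case False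
    then have "H!j > 0" "H!i = - H!j" using opp nz by auto
    then show ?thesis using dom_pos_abs_less_opposite[OF j i, of H] by simp
  qed
qed

lemma dom_neg_abs_neq:
  assumes i: "i < n" and j: "j < n" and ij: "i \<noteq> j" and level: "\<bar>H!i\<bar> = \<bar>H!j\<bar>"
  shows "\<bar>dom_neg n H ! i\<bar> \<noteq> \<bar>dom_neg n H ! j\<bar>"
proof (cases "H!i = H!j")
  case True
  have "count_after n H i \<noteq> count_after n H j"
    using count_after_mono[of i j n H] count_after_mono[of j i n H] True ij i j by fastforce
  moreover have "count_after n H i < count_value n H (H!i)"
    and "count_after n H j < count_value n H (H!i)"
    using count_after_less[OF i, of H] count_after_less[OF j, of H] True by simp_all
  ultimately show ?thesis
    using count_value_le[of n H "H!i"] True unfolding dom_neg_nth[OF i] dom_neg_nth[OF j] by auto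
next
  case False
  then have opp: "H!j = - H!i" and nz: "H!i \<noteq> 0" using level by (auto simp: abs_if split: if_splits)
  show ?thesis
  proof (cases "H!i > 0")
    case True
    then show ?thesis using dom_neg_abs_less_opposite[OF i j True opp] by simp
  next
    case False
    then have "H!j > 0" "H!i = - H!j" using opp nz by auto
    then show ?thesis using dom_neg_abs_less_opposite[OF j i, of H] by simp
  qed
qed

lemma dom_pos_rank_face: "dom_pos n H \<in> rank_face n H"
proof (rule rank_face_intro)
  show "length (dom_pos n H) = n" by (simp add: dom_pos_def)
  fix i assume i: "i < n"
  have before: "count_before H i < count_value n H (H!i)" using count_before_less[OF i, of H] .
  note bounds = before count_value_le[of n H "H!i"] count_below_le_count_upto[of n H "\<bar>H!i\<bar>"]
  show "real (count_below n H \<bar>H!i\<bar>) < \<bar>dom_pos n H ! i\<bar> \<and>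
      \<bar>dom_pos n H ! i\<bar> \<le> real (count_upto n H \<bar>H!i\<bar>)"
    using bounds unfolding dom_pos_nth[OF i] by auto
  show "\<exists>m::nat. \<bar>dom_pos n H ! i\<bar> = real m"
  proof (cases "H!i \<ge> 0")
    case True
    then show ?thesis using bounds unfolding dom_pos_nth[OF i]
      by (intro exI[of _ "count_upto n H \<bar>H!i\<bar> - count_before H i"]) auto
  next
    case False
    then show ?thesis using bounds unfolding dom_pos_nth[OF i]
      by (intro exI[of _ "count_below n H \<bar>H!i\<bar> + 1 + count_before H i"]) auto
  qed
  show "H!i \<noteq> 0 \<Longrightarrow> sgn (dom_pos n H ! i) = sgn (H!i)"
    using bounds unfolding dom_pos_nth[OF i] by (auto simp: sgn_if)
qed (rule dom_pos_abs_neq)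

lemma dom_neg_rank_face: "dom_neg n H \<in> rank_face n H"
proof (rule rank_face_intro)
  show "length (dom_neg n H) = n" by (simp add: dom_neg_def)
  fix i assume i: "i < n"
  have after: "count_after n H i < count_value n H (H!i)" using count_after_less[OF i, of H] .
  note bounds = after count_value_le[of n H "H!i"] count_below_le_count_upto[of n H "\<bar>H!i\<bar>"]
  show "real (count_below n H \<bar>H!i\<bar>) < \<bar>dom_neg n H ! i\<bar> \<and>
      \<bar>dom_neg n H ! i\<bar> \<le> real (count_upto n H \<bar>H!i\<bar>)"
    using bounds unfolding dom_neg_nth[OF i] by auto
  show "\<exists>m::nat. \<bar>dom_neg n H ! i\<bar> = real m"
  proof (cases "H!i > 0")
    case True
    then show ?thesis using bounds unfolding dom_neg_nth[OF i]
      by (intro exI[of _ "count_below n H \<bar>H!i\<bar> + 1 + count_after n H i"]) auto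
  next
    case False
    then show ?thesis using bounds unfolding dom_neg_nth[OF i]
      by (intro exI[of _ "count_upto n H \<bar>H!i\<bar> - count_after n H i"]) auto
  qed
  show "H!i \<noteq> 0 \<Longrightarrow> sgn (dom_neg n H ! i) = sgn (H!i)"
    using bounds unfolding dom_neg_nth[OF i] by (auto simp: sgn_if)
qed (rule dom_neg_abs_neq)

lemma dom_pos_Ck: "H \<in> Ck n \<Longrightarrow> dom_pos n H \<in> Ck n"
  by (rule rank_face_in_Ck[OF dom_pos_rank_face]) (auto simp: dom_pos_nth dest: count_before_mono)

lemma dom_neg_Ck: "H \<in> Ck n \<Longrightarrow> dom_neg n H \<in> Ck n"
  by (rule rank_face_in_Ck[OF dom_neg_rank_face]) (auto simp: dom_neg_nth dest: count_after_mono)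

lemma dom_pos_pos: "i < n \<Longrightarrow> H!i \<ge> 0 \<Longrightarrow> dom_pos n H ! i > 0"
  using count_before_less[of i n H] count_value_le[of n H "H!i"] by (simp add: dom_pos_nth)

lemma dom_pos_neg: "i < n \<Longrightarrow> H!i < 0 \<Longrightarrow> dom_pos n H ! i < 0"
  by (simp add: dom_pos_nth)

lemma dom_neg_neg: "i < n \<Longrightarrow> H!i \<le> 0 \<Longrightarrow> dom_neg n H ! i < 0"
  using count_after_less[of i n H] count_value_le[of n H "H!i"] by (simp add: dom_neg_nth)

lemma dom_pos_in_face_Int_Ck: "H \<in> Ck n \<Longrightarrow> dom_pos n H \<in> face n H \<inter> Ck n"
  using dom_pos_rank_face dom_pos_Ck face_eq_rank_face by blast

lemma dom_neg_in_face_Int_Ck: "H \<in> Ck n \<Longrightarrow> dom_neg n H \<in> face n H \<inter> Ck n"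
  using dom_neg_rank_face dom_neg_Ck face_eq_rank_face by blast

context
  fixes n :: nat and H G :: "real list"
  assumes H: "H \<in> Ck n" and chamber_sub: "face n H \<inter> Ck n \<subseteq> face n G"
begin

lemma chamber_sub_sign: "a < n \<Longrightarrow> 0 \<le> H!a * G!a"
  using face_sign_compatible[OF chamber_sub[THEN subsetD, OF dom_pos_in_face_Int_Ck[OF H]], of a]
    dom_pos_pos[of a n H] dom_pos_neg[of a n H]
  by (cases "H!a \<ge> 0") (simp_all add: zero_le_mult_iff)

lemma chamber_sub_zero: "a < n \<Longrightarrow> H!a = 0 \<Longrightarrow> G!a = 0"
  using face_sign_compatible[OF chamber_sub[THEN subsetD, OF dom_pos_in_face_Int_Ck[OF H]], of a]
    face_sign_compatible[OF chamber_sub[THEN subsetD, OF dom_neg_in_face_Int_Ck[OF H]], of a]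
    dom_pos_pos[of a n H] dom_neg_neg[of a n H]
  by (simp add: zero_le_mult_iff)

lemma chamber_sub_abs_mono: "a < n \<Longrightarrow> b < n \<Longrightarrow> \<bar>H!a\<bar> < \<bar>H!b\<bar> \<Longrightarrow> \<bar>G!a\<bar> \<le> \<bar>G!b\<bar>"
  using face_abs_mono[OF chamber_sub[THEN subsetD, OF dom_pos_in_face_Int_Ck[OF H]]]
    rank_face_abs_less[OF dom_pos_rank_face] by blast

lemma chamber_sub_abs_opposite:
  assumes a: "a < n" and b: "b < n" and nz: "H!a \<noteq> 0" and opp: "H!b = - H!a"
  shows "\<bar>G!a\<bar> = \<bar>G!b\<bar>"
proof -
  have "\<bar>G!a\<bar> = \<bar>G!b\<bar>" if "a < n" "b < n" "H!a > 0" "H!b = - H!a" for a b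
    using face_abs_mono[OF chamber_sub[THEN subsetD, OF dom_pos_in_face_Int_Ck[OF H]] that(2,1)
        dom_pos_abs_less_opposite[OF that]]
      face_abs_mono[OF chamber_sub[THEN subsetD, OF dom_neg_in_face_Int_Ck[OF H]] that(1,2)
        dom_neg_abs_less_opposite[OF that]]
    by simp
  moreover have "H!a > 0 \<or> H!b > 0" using nz opp by linarith
  ultimately show ?thesis using a b opp by (metis minus_minus)
qed

end

section \<open>The vector \<open>H\<close> of an admissible sequence\<close>

lemma rank_face_iff:
  "\<nu> \<in> rank_face n H \<longleftrightarrow> length \<nu> = n \<and>
     (\<forall>y. (\<lambda>i. \<bar>\<nu>!i\<bar>) ` {i. i < n \<and> \<bar>H!i\<bar> = y} = real ` {count_below n H y<..count_upto n H y}) \<and>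
     (\<forall>i<n. H!i \<noteq> 0 \<longrightarrow> sgn (\<nu>!i) = sgn (H!i))"
proof
  assume \<nu>: "\<nu> \<in> rank_face n H"
  have "length \<nu> = n" using \<nu> by (simp add: rank_face_def length_Wrho)
  then show "length \<nu> = n \<and>
     (\<forall>y. (\<lambda>i. \<bar>\<nu>!i\<bar>) ` {i. i < n \<and> \<bar>H!i\<bar> = y} = real ` {count_below n H y<..count_upto n H y}) \<and>
     (\<forall>i<n. H!i \<noteq> 0 \<longrightarrow> sgn (\<nu>!i) = sgn (H!i))"
    using rank_face_abs_image[OF \<nu>] rank_faceD(3)[OF \<nu>] by simp
next
  assume "length \<nu> = n \<and>
     (\<forall>y. (\<lambda>i. \<bar>\<nu>!i\<bar>) ` {i. i < n \<and> \<bar>H!i\<bar> = y} = real ` {count_below n H y<..count_upto n H y}) \<and>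
     (\<forall>i<n. H!i \<noteq> 0 \<longrightarrow> sgn (\<nu>!i) = sgn (H!i))"
  then have len: "length \<nu> = n"
    and img: "\<And>y. (\<lambda>i. \<bar>\<nu>!i\<bar>) ` {i. i < n \<and> \<bar>H!i\<bar> = y} =
      real ` {count_below n H y<..count_upto n H y}"
    and sgn: "\<And>i. i < n \<Longrightarrow> H!i \<noteq> 0 \<Longrightarrow> sgn (\<nu>!i) = sgn (H!i)"
    by auto
  have mem: "\<bar>\<nu>!i\<bar> \<in> real ` {count_below n H \<bar>H!i\<bar><..count_upto n H \<bar>H!i\<bar>}" if "i < n" for i
    using img[of "\<bar>H!i\<bar>"] that by blast
  show "\<nu> \<in> rank_face n H"
  proof (rule rank_face_intro[OF len _ _ sgn])
    fix i assume "i < n"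
    from mem[OF this] obtain m
      where "\<bar>\<nu>!i\<bar> = real m" "m \<in> {count_below n H \<bar>H!i\<bar><..count_upto n H \<bar>H!i\<bar>}"
      by (rule imageE)
    then show "real (count_below n H \<bar>H!i\<bar>) < \<bar>\<nu>!i\<bar> \<and> \<bar>\<nu>!i\<bar> \<le> real (count_upto n H \<bar>H!i\<bar>)"
      and "\<exists>m::nat. \<bar>\<nu>!i\<bar> = real m"
      by simp_all
  next
    fix i j assume ij: "i < n" "j < n" "i \<noteq> j" "\<bar>H!i\<bar> = \<bar>H!j\<bar>"
    let ?K = "{k. k < n \<and> \<bar>H!k\<bar> = \<bar>H!i\<bar>}"
    have "card ((\<lambda>k. \<bar>\<nu>!k\<bar>) ` ?K) = count_upto n H \<bar>H!i\<bar> - count_below n H \<bar>H!i\<bar>"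
      unfolding img by (simp add: card_image)
    also have "\<dots> = card ?K" using count_upto_eq[of n H "\<bar>H!i\<bar>"] by simp
    finally have "card ((\<lambda>k. \<bar>\<nu>!k\<bar>) ` ?K) = card ?K" .
    then have "inj_on (\<lambda>k. \<bar>\<nu>!k\<bar>) ?K" by (rule eq_card_imp_inj_on[rotated]) simp
    then show "\<bar>\<nu>!i\<bar> \<noteq> \<bar>\<nu>!j\<bar>" using ij by (auto dest: inj_onD)
  qed
qed

lemma block_eq_rank_interval:
  assumes len: "length H = n" and nat: "\<forall>k<n. \<exists>m::nat. \<bar>H!k\<bar> = real m"
  shows "block H t = real ` {count_below n H (real t)<..count_upto n H (real t)}"
proof -
  have below_set: "{k. k < n \<and> \<bar>H!k\<bar> < real t} = (\<Union>s\<in>{..<t}. {k. k < n \<and> \<bar>H!k\<bar> = real s})"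
    using nat by force
  have below: "(\<Sum>s<t. mcount H s) = count_below n H (real t)"
    unfolding count_below_def below_set mcount_def len by (subst card_UN_disjoint) auto
  have upto_set: "{k. k < n \<and> \<bar>H!k\<bar> \<le> real t} = (\<Union>s\<in>{..t}. {k. k < n \<and> \<bar>H!k\<bar> = real s})"
    using nat by force
  have upto: "(\<Sum>s\<le>t. mcount H s) = count_upto n H (real t)"
    unfolding count_upto_def upto_set mcount_def len by (subst card_UN_disjoint) auto
  have "{count_below n H (real t) + 1..count_upto n H (real t)} =
      {count_below n H (real t)<..count_upto n H (real t)}"
    by auto
  then show ?thesis unfolding block_def below upto by simp
qed

lemma sum_list_map_upt_Suc: "sum_list (map f [Suc 0..<Suc l]) = (\<Sum>i<l. f (Suc i))"
  by (induction l) auto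

lemma count_list_replicate: "count_list (replicate k c) v = (if c = v then k else 0)"
  by (induction k) auto

lemma sorted_wrt_replicate: "sorted_wrt (\<ge>) (replicate k (c::real))"
  by (induction k) auto

lemma sorted_wrt_concat_replicate:
  assumes "sorted_wrt (\<lambda>a b. g b \<le> g a) xs"
  shows "sorted_wrt (\<ge>) (concat (map (\<lambda>t. replicate (f t) (g t :: real)) xs))"
  using assms
proof (induction xs)
  case (Cons a xs)
  then show ?case by (auto simp: sorted_wrt_append sorted_wrt_replicate)
qed simp

lemma count_list_eq_card: "count_list xs v = card {i. i < length xs \<and> xs ! i = v}"
  by (simp add: count_list_eq_length_filter length_filter_conv_card eq_commute)

lemma count_list_ge_2:
  assumes "a < length xs" "b < length xs" "a \<noteq> b" "xs!a = v" "xs!b = v"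
  shows "2 \<le> count_list xs v"
proof -
  have "{a, b} \<subseteq> {i. i < length xs \<and> xs ! i = v}" using assms by auto
  then have "card {a, b} \<le> card {i. i < length xs \<and> xs ! i = v}" by (rule card_mono[rotated]) simp
  then show ?thesis using \<open>a \<noteq> b\<close> by (simp add: count_list_eq_card)
qed

locale admissible_seq =
  fixes n :: nat and ps :: "(nat \<times> nat) list"
  assumes adm: "admissible n ps"
begin

abbreviation l :: nat where "l \<equiv> length ps"
definition p_at :: "nat \<Rightarrow> nat" where "p_at t = fst (ps ! (t - 1))"
definition q_at :: "nat \<Rightarrow> nat" where "q_at t = snd (ps ! (t - 1))"

definition Hpos :: "real list" where
  "Hpos = concat (map (\<lambda>t. replicate (p_at t) (real t)) (rev [1..<l+1]))"

definition Hneg :: "real list" where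
  "Hneg = concat (map (\<lambda>t. replicate (q_at t) (- real t)) [1..<l+1])"

definition zeros :: nat where "zeros = n - (\<Sum>(p,q)\<leftarrow>ps. p + q)"

lemma Hvec_split: "Hvec n ps = Hpos @ replicate zeros 0 @ Hneg"
  by (simp add: Hvec_def Hpos_def Hneg_def zeros_def p_at_def q_at_def Let_def)

lemma sum_pairs: "(\<Sum>(p,q)\<leftarrow>ps. p + q) = (\<Sum>i<l. p_at (Suc i) + q_at (Suc i))"
proof -
  have "(\<Sum>(p,q)\<leftarrow>ps. p + q) = (\<Sum>i = 0..<l. (\<lambda>(p,q). p + q) (ps ! i))"
    by (simp add: sum_list_sum_nth)
  also have "\<dots> = (\<Sum>i<l. p_at (Suc i) + q_at (Suc i))"
    by (rule sum.cong) (auto simp: p_at_def q_at_def split: prod.splits)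
  finally show ?thesis .
qed

lemma length_Hpos: "length Hpos = (\<Sum>i<l. p_at (Suc i))"
  by (simp add: Hpos_def length_concat rev_map[symmetric] comp_def sum_list_map_upt_Suc
      del: upt_Suc)

lemma length_Hneg: "length Hneg = (\<Sum>i<l. q_at (Suc i))"
  by (simp add: Hneg_def length_concat comp_def sum_list_map_upt_Suc del: upt_Suc)

lemma length_Hvec: "length (Hvec n ps) = n"
proof -
  have "(\<Sum>(p,q)\<leftarrow>ps. p + q) \<le> n" using adm by (simp add: admissible_def)
  then show ?thesis
    by (simp add: Hvec_split length_Hpos length_Hneg zeros_def sum_pairs sum.distrib)
qed

lemma sorted_Hvec: "sorted_wrt (\<ge>) (Hvec n ps)"
proof -
  have sA: "sorted_wrt (\<lambda>x y. y \<le> x) Hpos" unfolding Hpos_def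
    by (rule sorted_wrt_concat_replicate)
      (simp add: sorted_wrt_rev sorted_wrt_upt[THEN sorted_wrt_mono_rel[rotated]] del: upt_Suc)
  have sB: "sorted_wrt (\<lambda>x y. y \<le> x) Hneg" unfolding Hneg_def
    by (rule sorted_wrt_concat_replicate)
      (simp add: sorted_wrt_upt[THEN sorted_wrt_mono_rel[rotated]] del: upt_Suc)
  have setA: "x \<in> set Hpos \<Longrightarrow> x > 0" for x by (auto simp: Hpos_def)
  have setB: "x \<in> set Hneg \<Longrightarrow> x < 0" for x by (auto simp: Hneg_def)
  have AB: "\<forall>x\<in>set Hpos. \<forall>y\<in>set Hneg. y \<le> x" using setA setB by force
  show ?thesis unfolding Hvec_split using sA sB setA setB AB
    by (auto simp: sorted_wrt_append sorted_wrt_replicate intro: less_imp_le)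
qed

lemma set_Hvec: "x \<in> set (Hvec n ps) \<Longrightarrow> x = 0 \<or> (\<exists>t. 1 \<le> t \<and> t \<le> l \<and> (x = real t \<or> x = - real t))"
  by (auto simp: Hvec_split Hpos_def Hneg_def)

lemma count_Hpos: "1 \<le> t \<Longrightarrow> count_list Hpos (real t) = (if t \<le> l then p_at t else 0)"
proof -
  assume t: "1 \<le> t"
  have "count_list Hpos (real t) = (\<Sum>i<l. if Suc i = t then p_at t else 0)"
    by (simp add: Hpos_def count_list_concat rev_map[symmetric] comp_def count_list_replicate
        sum_list_map_upt_Suc del: upt_Suc
        cong: if_cong)
  also have "\<dots> = (\<Sum>i<l. if i = t - 1 then p_at t else 0)"
    using t by (intro sum.cong) auto
  also have "\<dots> = (if t \<le> l then p_at t else 0)" using t by auto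
  finally show ?thesis .
qed

lemma count_Hneg: "1 \<le> t \<Longrightarrow> count_list Hneg (- real t) = (if t \<le> l then q_at t else 0)"
proof -
  assume t: "1 \<le> t"
  have "count_list Hneg (- real t) = (\<Sum>i<l. if Suc i = t then q_at t else 0)"
    by (simp add: Hneg_def count_list_concat comp_def count_list_replicate sum_list_map_upt_Suc
        del: upt_Suc cong: if_cong)
  also have "\<dots> = (\<Sum>i<l. if i = t - 1 then q_at t else 0)"
    using t by (intro sum.cong) auto
  also have "\<dots> = (if t \<le> l then q_at t else 0)" using t by auto
  finally show ?thesis .
qed

lemma count_Hvec_pos: "1 \<le> t \<Longrightarrow> count_list (Hvec n ps) (real t) = (if t \<le> l then p_at t else 0)"
proof -
  assume t: "1 \<le> t"
  have "real t \<notin> set Hneg" using t by (auto simp: Hneg_def)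
  then show ?thesis using t by (simp add: Hvec_split count_Hpos count_list_replicate)
qed

lemma count_Hvec_neg: "1 \<le> t \<Longrightarrow> count_list (Hvec n ps) (- real t) = (if t \<le> l then q_at t else 0)"
proof -
  assume t: "1 \<le> t"
  have "- real t \<notin> set Hpos" using t by (auto simp: Hpos_def)
  then show ?thesis using t by (simp add: Hvec_split count_Hneg count_list_replicate)
qed

lemma admissible_pair: "1 \<le> t \<Longrightarrow> t \<le> l \<Longrightarrow> (p_at t = 0 \<longrightarrow> q_at t = 1) \<and> (q_at t = 0 \<longrightarrow> p_at t = 1)"
proof -
  assume "1 \<le> t" "t \<le> l"
  then have m: "ps ! (t - 1) \<in> set ps" by simp
  obtain p q where pq: "ps ! (t - 1) = (p, q)" by fastforce
  have "(p = 0 \<longrightarrow> q = 1) \<and> (q = 0 \<longrightarrow> p = 1)" using adm m pq unfolding admissible_def by fastforce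
  then show ?thesis using pq by (simp add: p_at_def q_at_def)
qed

lemma Hvec_abs_nat: "k < n \<Longrightarrow> \<exists>m. m \<le> l \<and> \<bar>Hvec n ps ! k\<bar> = real m"
proof -
  assume "k < n"
  then have "Hvec n ps ! k \<in> set (Hvec n ps)" using length_Hvec by simp
  from set_Hvec[OF this] show ?thesis by auto
qed

lemma Hvec_nth_if_in_set: "v \<in> set (Hvec n ps) \<Longrightarrow> \<exists>k<n. Hvec n ps ! k = v"
  using length_Hvec by (metis in_set_conv_nth)

lemma Hvec_attains_level: "1 \<le> t \<Longrightarrow> t \<le> l \<Longrightarrow> \<exists>k<n. \<bar>Hvec n ps ! k\<bar> = real t"
proof -
  assume t: "1 \<le> t" "t \<le> l"
  show ?thesis
  proof (cases "p_at t = 0")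
    case True
    then have "count_list (Hvec n ps) (- real t) \<noteq> 0"
      using admissible_pair[OF t] count_Hvec_neg[OF t(1)] t by simp
    then have "- real t \<in> set (Hvec n ps)" using count_list_0_iff by metis
    then show ?thesis using Hvec_nth_if_in_set by force
  next
    case False
    then have "count_list (Hvec n ps) (real t) \<noteq> 0" using count_Hvec_pos[OF t(1)] t by simp
    then have "real t \<in> set (Hvec n ps)" using count_list_0_iff by metis
    then show ?thesis using Hvec_nth_if_in_set by force
  qed
qed

lemma Hvec_opposite_if_repeated:
  assumes "a < n" "b < n" "a \<noteq> b" "Hvec n ps ! a = Hvec n ps ! b" "Hvec n ps ! a \<noteq> 0"
  shows "\<exists>k<n. Hvec n ps ! k = - (Hvec n ps ! a)"
proof -
  let ?H = "Hvec n ps"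
  have c2: "count_list ?H (?H!a) \<ge> 2" using count_list_ge_2[of a ?H b] assms length_Hvec by simp
  have "?H!a \<in> set ?H" using assms length_Hvec by simp
  then obtain t where t: "1 \<le> t" "t \<le> l" "?H!a = real t \<or> ?H!a = - real t"
    using set_Hvec assms(5) by blast
  from t(3) show ?thesis
  proof
    assume e: "?H!a = real t"
    then have "p_at t \<ge> 2" using c2 count_Hvec_pos[OF t(1)] t(2) by simp
    then have "q_at t \<noteq> 0" using admissible_pair[OF t(1,2)] by auto
    then have "count_list ?H (- real t) \<noteq> 0" using count_Hvec_neg[OF t(1)] t(2) by simp
    then have "- real t \<in> set ?H" using count_list_0_iff by metis
    then show ?thesis using Hvec_nth_if_in_set e by force
  next
    assume e: "?H!a = - real t"
    then have "q_at t \<ge> 2" using c2 count_Hvec_neg[OF t(1)] t(2) by simp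
    then have "p_at t \<noteq> 0" using admissible_pair[OF t(1,2)] by auto
    then have "count_list ?H (real t) \<noteq> 0" using count_Hvec_pos[OF t(1)] t(2) by simp
    then have "real t \<in> set ?H" using count_list_0_iff by metis
    then show ?thesis using Hvec_nth_if_in_set e by force
  qed
qed

lemma Hvec_in_Ck: "Hvec n ps \<in> Ck n"
  using sorted_Hvec length_Hvec by (simp add: Ck_def sorted_wrt_iff_nth_less)

lemma block_Hvec:
  "block (Hvec n ps) t =
    real ` {count_below n (Hvec n ps) (real t)<..count_upto n (Hvec n ps) (real t)}"
proof (rule block_eq_rank_interval[OF length_Hvec])
  show "\<forall>k<n. \<exists>m::nat. \<bar>Hvec n ps ! k\<bar> = real m" using Hvec_abs_nat by blast
qed

lemma face_descr_subset_rank_face: "face_descr n ps \<subseteq> rank_face n (Hvec n ps)"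
proof
  let ?H = "Hvec n ps"
  let ?img = "\<lambda>\<mu> y. (\<lambda>i. \<bar>\<mu>!i\<bar>) ` {i. i < n \<and> \<bar>?H!i\<bar> = y}"
  have zero_level: "{i. i < n \<and> ?H!i = 0} = {i. i < n \<and> \<bar>?H!i\<bar> = real 0}" by auto
  fix \<mu>
  assume "\<mu> \<in> face_descr n ps"
  then have len: "length \<mu> = n"
    and desc: "\<forall>t\<in>{1..l}. ?img \<mu> (real t) = block ?H t \<and>
      (\<forall>i<n. \<bar>?H!i\<bar> = real t \<longrightarrow> sgn (\<mu>!i) = sgn (?H!i))"
    and zero: "?img \<mu> (real 0) = block ?H 0"
    unfolding face_descr_def Let_def zero_level by simp_all
  have "?img \<mu> y = real ` {count_below n ?H y<..count_upto n ?H y}" for y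
  proof (cases "\<exists>t \<le> l. y = real t")
    case True
    then obtain t where "t \<le> l" "y = real t" by blast
    moreover have "?img \<mu> (real t) = block ?H t"
      using desc zero \<open>t \<le> l\<close> by (cases "t = 0") simp_all
    ultimately show ?thesis using block_Hvec[of t] by simp
  next
    case False
    \<comment> \<open>\<open>y\<close> is not a level of \<open>H\<close>, so both sides are empty\<close>
    then have "{i. i < n \<and> \<bar>?H!i\<bar> = y} = {}" using Hvec_abs_nat by blast
    then show ?thesis using count_upto_eq[of n ?H y] by simp
  qed
  moreover have "sgn (\<mu>!i) = sgn (?H!i)" if i: "i < n" and nz: "?H!i \<noteq> 0" for i
  proof -
    obtain t where "t \<le> l" "\<bar>?H!i\<bar> = real t" using Hvec_abs_nat[OF i] by blast
    moreover have "t \<noteq> 0" using calculation nz by auto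
    ultimately show ?thesis using desc i by auto
  qed
  ultimately show "\<mu> \<in> rank_face n ?H" using len by (simp add: rank_face_iff)
qed

lemma rank_face_subset_face_descr: "rank_face n (Hvec n ps) \<subseteq> face_descr n ps"
proof
  let ?H = "Hvec n ps"
  let ?img = "\<lambda>\<mu> y. (\<lambda>i. \<bar>\<mu>!i\<bar>) ` {i. i < n \<and> \<bar>?H!i\<bar> = y}"
  fix \<mu>
  assume "\<mu> \<in> rank_face n ?H"
  then have len: "length \<mu> = n"
    and img: "\<And>y. ?img \<mu> y = real ` {count_below n ?H y<..count_upto n ?H y}"
    and sgn: "\<And>i. i < n \<Longrightarrow> ?H!i \<noteq> 0 \<Longrightarrow> sgn (\<mu>!i) = sgn (?H!i)"
    by (simp_all add: rank_face_iff)
  have levels: "?img \<mu> (real t) = block ?H t" for t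
    using img block_Hvec by simp
  have "{i. i < n \<and> ?H!i = 0} = {i. i < n \<and> \<bar>?H!i\<bar> = real 0}" by auto
  then have zero: "(\<lambda>i. \<bar>\<mu>!i\<bar>) ` {i. i < n \<and> ?H!i = 0} = block ?H 0"
    using levels[of 0] by simp
  show "\<mu> \<in> face_descr n ps"
    unfolding face_descr_def Let_def
  proof (intro CollectI conjI ballI allI impI len levels zero)
    fix t i assume "t \<in> {1..l}" "i < n" "\<bar>?H!i\<bar> = real t"
    then show "sgn (\<mu>!i) = sgn (?H!i)" using sgn by auto
  qed
qed

text \<open>Admissibility makes every level \<open>1, \<dots>, l\<close> occur, so \<open>\<bar>H_a\<bar>\<close> is the number of
  nonzero levels up to \<open>\<bar>H_a\<bar>\<close>.\<close>

lemma abs_Hvec_eq_card_levels: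
  assumes a: "a < n"
  shows "\<bar>Hvec n ps ! a\<bar> = real (card ((\<lambda>b. \<bar>Hvec n ps ! b\<bar>) `
    {b. b < n \<and> 0 < \<bar>Hvec n ps ! b\<bar> \<and> \<bar>Hvec n ps ! b\<bar> \<le> \<bar>Hvec n ps ! a\<bar>}))"
proof -
  let ?H = "Hvec n ps"
  obtain m where m: "m \<le> l" "\<bar>?H!a\<bar> = real m" using Hvec_abs_nat[OF a] by auto
  have "(\<lambda>b. \<bar>?H!b\<bar>) ` {b. b < n \<and> 0 < \<bar>?H!b\<bar> \<and> \<bar>?H!b\<bar> \<le> \<bar>?H!a\<bar>} = real ` {1..m}"
  proof
    show "(\<lambda>b. \<bar>?H!b\<bar>) ` {b. b < n \<and> 0 < \<bar>?H!b\<bar> \<and> \<bar>?H!b\<bar> \<le> \<bar>?H!a\<bar>} \<subseteq> real ` {1..m}"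
      using Hvec_abs_nat m by fastforce
    show "real ` {1..m} \<subseteq> (\<lambda>b. \<bar>?H!b\<bar>) ` {b. b < n \<and> 0 < \<bar>?H!b\<bar> \<and> \<bar>?H!b\<bar> \<le> \<bar>?H!a\<bar>}"
    proof
      fix x assume "x \<in> real ` {1..m}"
      then obtain t where t: "1 \<le> t" "t \<le> m" "x = real t" by auto
      obtain b where "b < n" "\<bar>?H!b\<bar> = real t" using Hvec_attains_level[of t] t m by auto
      then show "x \<in> (\<lambda>b. \<bar>?H!b\<bar>) ` {b. b < n \<and> 0 < \<bar>?H!b\<bar> \<and> \<bar>?H!b\<bar> \<le> \<bar>?H!a\<bar>}"
        using t m by (auto intro!: image_eqI[of _ _ b])
    qed
  qed
  then show ?thesis using m by (simp add: card_image)
qed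

lemma chamber_sub_abs_level:
  assumes sub: "face n (Hvec n ps) \<inter> Ck n \<subseteq> face n G"
    and ab: "a < n" "b < n" "\<bar>Hvec n ps ! a\<bar> = \<bar>Hvec n ps ! b\<bar>"
  shows "\<bar>G!a\<bar> = \<bar>G!b\<bar>"
proof -
  let ?H = "Hvec n ps"
  note opposite = chamber_sub_abs_opposite[OF Hvec_in_Ck sub]
  show ?thesis
  proof (cases "?H!a = 0")
    case True
    then show ?thesis using chamber_sub_zero[OF Hvec_in_Ck sub] ab by simp
  next
    case nz: False
    show ?thesis
    proof (cases "?H!b = - ?H!a")
      case True
      then show ?thesis using opposite[OF ab(1,2) nz] by simp
    next
      case False
      then have same: "?H!b = ?H!a" using ab(3) by (simp add: abs_eq_iff)
      show ?thesis
      proof (cases "a = b")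
        case False
        \<comment> \<open>a repeated nonzero entry of an admissible \<open>H\<close> has an opposite entry\<close>
        then obtain k where k: "k < n" "?H!k = - ?H!a"
          using Hvec_opposite_if_repeated[OF ab(1,2) False same[symmetric] nz] by blast
        then show ?thesis using opposite[OF ab(1) k(1) nz] opposite[OF ab(2) k(1)] nz same by simp
      qed simp
    qed
  qed
qed

end

section \<open>\<open>\<Phi>\<^sub>H \<inter> C\<^sub>k\<close> determines the sequence\<close>

lemma card_image_eq_if_same_fibres:
  assumes "\<And>x y. x \<in> A \<Longrightarrow> y \<in> A \<Longrightarrow> f x = f y \<longleftrightarrow> g x = g y"
  shows "card (f ` A) = card (g ` A)"
proof -
  define \<phi> where "\<phi> v = g (inv_into A f v)" for v
  have \<phi>f: "\<phi> (f x) = g x" if "x \<in> A" for x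
  proof -
    have "inv_into A f (f x) \<in> A" "f (inv_into A f (f x)) = f x"
      using that by (auto intro: inv_into_into f_inv_into_f)
    then show ?thesis using assms that by (simp add: \<phi>_def)
  qed
  have "inj_on \<phi> (f ` A)"
  proof (rule inj_onI)
    fix u v assume "u \<in> f ` A" "v \<in> f ` A" "\<phi> u = \<phi> v"
    then obtain x y where "x \<in> A" "y \<in> A" "u = f x" "v = f y" "g x = g y" using \<phi>f by auto
    then show "u = v" using assms by auto
  qed
  moreover have "\<phi> ` (f ` A) = g ` A" using \<phi>f by (auto simp: image_image image_iff)
  ultimately show ?thesis by (metis card_image)
qed

lemma Hvec_inj:
  assumes adm: "admissible n ps" and adm': "admissible n ps'" and eq: "Hvec n ps = Hvec n ps'"
  shows "ps = ps'"
proof -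
  interpret A: admissible_seq n ps by unfold_locales (rule adm)
  interpret B: admissible_seq n ps' by unfold_locales (rule adm')
  have p: "(if t \<le> length ps then A.p_at t else 0) = (if t \<le> length ps' then B.p_at t else 0)"
    and q: "(if t \<le> length ps then A.q_at t else 0) = (if t \<le> length ps' then B.q_at t else 0)"
    if "1 \<le> t" for t
    using A.count_Hvec_pos[OF that] B.count_Hvec_pos[OF that]
      A.count_Hvec_neg[OF that] B.count_Hvec_neg[OF that] eq by simp_all
  \<comment> \<open>the top level \<open>l\<close> occurs in \<open>H\<close>, as \<open>(p_l, q_l) \<noteq> (0, 0)\<close>\<close>
  have top: "A.p_at t + A.q_at t \<noteq> 0" if "1 \<le> t" "t \<le> length ps" for t
    using A.admissible_pair[OF that] by fastforce
  have top': "B.p_at t + B.q_at t \<noteq> 0" if "1 \<le> t" "t \<le> length ps'" for t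
    using B.admissible_pair[OF that] by fastforce
  have len: "length ps = length ps'"
  proof (rule ccontr)
    assume "length ps \<noteq> length ps'"
    then consider "length ps < length ps'" | "length ps' < length ps" by linarith
    then show False
    proof cases
      case 1
      then show False using p[of "length ps'"] q[of "length ps'"] top'[of "length ps'"] by auto
    next
      case 2
      then show False using p[of "length ps"] q[of "length ps"] top[of "length ps"] by auto
    qed
  qed
  show ?thesis
  proof (rule nth_equalityI[OF len])
    fix i assume i: "i < length ps"
    have "A.p_at (Suc i) = B.p_at (Suc i)" "A.q_at (Suc i) = B.q_at (Suc i)"
      using p[of "Suc i"] q[of "Suc i"] i len by auto
    then show "ps ! i = ps' ! i"
      by (simp add: A.p_at_def B.p_at_def A.q_at_def B.q_at_def prod_eq_iff)
  qed
qed

lemma sgn_eq_if_face_Int_Ck_eq: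
  assumes H: "H \<in> Ck n" and G: "G \<in> Ck n" and eq: "face n H \<inter> Ck n = face n G \<inter> Ck n"
    and a: "a < n"
  shows "sgn (H!a) = sgn (G!a)"
proof -
  have HG: "face n H \<inter> Ck n \<subseteq> face n G" and GH: "face n G \<inter> Ck n \<subseteq> face n H"
    using eq by blast+
  have "0 \<le> H!a * G!a" using chamber_sub_sign[OF H HG a] .
  moreover have "H!a = 0 \<longleftrightarrow> G!a = 0"
    using chamber_sub_zero[OF H HG a] chamber_sub_zero[OF G GH a] by blast
  ultimately show ?thesis by (auto simp: sgn_if zero_le_mult_iff)
qed

lemma abs_Hvec_le_iff_if_face_Int_Ck_eq:
  assumes adm: "admissible n ps" and adm': "admissible n ps'"
    and eq: "face n (Hvec n ps) \<inter> Ck n = face n (Hvec n ps') \<inter> Ck n"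
    and ab: "a < n" "b < n"
  shows "\<bar>Hvec n ps ! b\<bar> \<le> \<bar>Hvec n ps ! a\<bar> \<longleftrightarrow> \<bar>Hvec n ps' ! b\<bar> \<le> \<bar>Hvec n ps' ! a\<bar>"
proof -
  interpret A: admissible_seq n ps by unfold_locales (rule adm)
  interpret B: admissible_seq n ps' by unfold_locales (rule adm')
  let ?H = "Hvec n ps" and ?G = "Hvec n ps'"
  have HG: "face n ?H \<inter> Ck n \<subseteq> face n ?G" and GH: "face n ?G \<inter> Ck n \<subseteq> face n ?H"
    using eq by blast+
  have "\<bar>?G!b\<bar> \<le> \<bar>?G!a\<bar>" if le: "\<bar>?H!b\<bar> \<le> \<bar>?H!a\<bar>"
  proof (cases "\<bar>?H!b\<bar> = \<bar>?H!a\<bar>")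
    case True
    then show ?thesis using A.chamber_sub_abs_level[OF HG ab(2,1)] by simp
  next
    case False
    then show ?thesis using chamber_sub_abs_mono[OF A.Hvec_in_Ck HG ab(2,1)] le by simp
  qed
  moreover have "\<bar>?H!b\<bar> \<le> \<bar>?H!a\<bar>" if le: "\<bar>?G!b\<bar> \<le> \<bar>?G!a\<bar>"
  proof (cases "\<bar>?G!b\<bar> = \<bar>?G!a\<bar>")
    case True
    then show ?thesis using B.chamber_sub_abs_level[OF GH ab(2,1)] by simp
  next
    case False
    then show ?thesis using chamber_sub_abs_mono[OF B.Hvec_in_Ck GH ab(2,1)] le by simp
  qed
  ultimately show ?thesis by blast
qed

text \<open>Both \<open>\<bar>H_a\<bar>\<close> and \<open>\<bar>G_a\<bar>\<close> count the nonzero levels up to coordinate \<open>a\<close>, and these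
  levels are the same for \<open>H\<close> and \<open>G\<close>.\<close>

lemma Hvec_eq_if_face_Int_Ck_eq:
  assumes adm: "admissible n ps" and adm': "admissible n ps'"
    and eq: "face n (Hvec n ps) \<inter> Ck n = face n (Hvec n ps') \<inter> Ck n"
  shows "Hvec n ps = Hvec n ps'"
proof -
  interpret A: admissible_seq n ps by unfold_locales (rule adm)
  interpret B: admissible_seq n ps' by unfold_locales (rule adm')
  let ?H = "Hvec n ps" and ?G = "Hvec n ps'"
  have sgn: "sgn (?H!a) = sgn (?G!a)" if "a < n" for a
    using sgn_eq_if_face_Int_Ck_eq[OF A.Hvec_in_Ck B.Hvec_in_Ck eq that] .
  note le = abs_Hvec_le_iff_if_face_Int_Ck_eq[OF adm adm' eq]
  have abs: "\<bar>?H!a\<bar> = \<bar>?G!a\<bar>" if a: "a < n" for a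
  proof -
    let ?S = "{b. b < n \<and> 0 < \<bar>?H!b\<bar> \<and> \<bar>?H!b\<bar> \<le> \<bar>?H!a\<bar>}"
    let ?S' = "{b. b < n \<and> 0 < \<bar>?G!b\<bar> \<and> \<bar>?G!b\<bar> \<le> \<bar>?G!a\<bar>}"
    have S: "?S = ?S'"
    proof (rule Collect_cong)
      fix b
      show "(b < n \<and> 0 < \<bar>?H!b\<bar> \<and> \<bar>?H!b\<bar> \<le> \<bar>?H!a\<bar>) \<longleftrightarrow>
        (b < n \<and> 0 < \<bar>?G!b\<bar> \<and> \<bar>?G!b\<bar> \<le> \<bar>?G!a\<bar>)"
      proof (cases "b < n")
        case True
        have zero: "?H!b = 0 \<longleftrightarrow> ?G!b = 0"
          using sgn[OF True] by (metis sgn_eq_0_iff)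
        show ?thesis unfolding zero_less_abs_iff le[OF a True] zero ..
      qed simp
    qed
    have "card ((\<lambda>b. \<bar>?H!b\<bar>) ` ?S) = card ((\<lambda>b. \<bar>?G!b\<bar>) ` ?S)"
    proof (rule card_image_eq_if_same_fibres)
      fix x y assume "x \<in> ?S" "y \<in> ?S"
      then have x: "x < n" and y: "y < n" by simp_all
      show "\<bar>?H!x\<bar> = \<bar>?H!y\<bar> \<longleftrightarrow> \<bar>?G!x\<bar> = \<bar>?G!y\<bar>"
        using le[OF x y] le[OF y x] by linarith
    qed
    then have "real (card ((\<lambda>b. \<bar>?H!b\<bar>) ` ?S)) = real (card ((\<lambda>b. \<bar>?G!b\<bar>) ` ?S'))"
      unfolding S by simp
    then show ?thesis
      unfolding A.abs_Hvec_eq_card_levels[OF a, symmetric]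
        B.abs_Hvec_eq_card_levels[OF a, symmetric] .
  qed
  show ?thesis
  proof (rule nth_equalityI)
    fix a assume "a < length ?H"
    then have a: "a < n" using A.length_Hvec by simp
    show "?H!a = ?G!a" using sgn[OF a] abs[OF a] by (metis sgn_mult_abs)
  qed (simp add: A.length_Hvec B.length_Hvec)
qed

theorem theorem3p3:
  fixes n :: nat and ps :: "(nat \<times> nat) list"
  assumes "n \<ge> 2" and "admissible n ps"
  shows "face n (Hvec n ps) = face_descr n ps
       \<and> (\<forall>\<rho>'' \<in> face n (Hvec n ps). face n (Hvec n ps) = (\<lambda>w. w \<rho>'') ` Wl n (Hvec n ps))
       \<and> face n (Hvec n ps) \<inter> Ck n =
           {\<mu> \<in> face n (Hvec n ps). \<forall>i j. i < j \<and> j < n \<longrightarrow> \<mu> ! j < \<mu> ! i}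
       \<and> (\<forall>ps'. admissible n ps' \<and> face n (Hvec n ps') \<inter> Ck n = face n (Hvec n ps) \<inter> Ck n
                \<longrightarrow> ps' = ps)"
proof -
  interpret admissible_seq n ps by unfold_locales (rule assms(2))
  have "face n (Hvec n ps) = face_descr n ps"
    using face_eq_rank_face face_descr_subset_rank_face rank_face_subset_face_descr by blast
  moreover have "ps' = ps"
    if "admissible n ps'" "face n (Hvec n ps') \<inter> Ck n = face n (Hvec n ps) \<inter> Ck n" for ps'
    using Hvec_inj[OF that(1) assms(2) Hvec_eq_if_face_Int_Ck_eq[OF that(1) assms(2) that(2)]] .
  moreover have "\<forall>\<rho>'' \<in> face n (Hvec n ps). face n (Hvec n ps) = (\<lambda>w. w \<rho>'') ` Wl n (Hvec n ps)"
    using face_eq_Wl_orbit by blast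
  ultimately show ?thesis using face_Int_Ck[of n "Hvec n ps"] by blast
qed

end
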